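(* Let $(V,\mathcal{E})$ be a forward or backward neutral genealogy model and let $\sigma\in\mathcal{P}$ be uniform and independent of $\mathcal{E}$. Then: 1. $\sigma(\mathcal{E})$ is completely neutral. 2(a). If $(V,\mathcal{E})$ is forward neutral, then for each $n$, $(\sigma(\mathcal{E}_m))_{m\ge n}$ is independent of $(\sigma_m)_{m\le n}$. 2(b). If $(V,\mathcal{E})$ is backward neutral, then for each $n$, $(\sigma(\mathcal{E}_m))_{m<n}$ is independent of $(\sigma_m)_{m\ge n}$.
   Context: Data: $\tau\in\mathbb{N}\cup\{\infty\}$, positive integers $(X_n)_{n<\tau}$, vectors $k_n=(k_n(i))_{i=1}^{X_n}$ of nonnegative integers with $\sum_ik_n(i)=X_{n+1}$. $V_n=\{(n,i):1\le i\le X_n\}$, $V=\bigcup_nV_n$. A genealogy model is a random edge set $\mathcal{E}\subset\bigcup_nV_n\times V_{n+1}$ such that each vertex of $V_{n+1}$ has exactly one parent in $V_n$ and the out-degrees in $V_n$ are a permutation of $k_n$. $\mathcal{E}_n=\mathcal{E}\cap(V_n\times V_{n+1})$, $K_n=(\mathrm{od}((n,i)))_i$, $\Xi_n$ = partition of $V_{n+1}$ into sets of vertices with a common parent. Forward neutral: for all $n$, $K_n$ is exchangeable and independent of $(\mathcal{E}_m)_{m<n}$. Backward neutral: for all $n$, $\Xi_n$ is exchangeable (its law is invariant under relabelling $V_{n+1}$ by any fixed permutation) and independent of $(\mathcal{E}_m)_{m>n}$. $\mathcal{E}_n$ is exchangeable if $\mathcal{E}_n$ has the same law as $\{(\pi(v),\pi'(w)):(v,w)\in\mathcal{E}_n\}$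 for every fixed permutation $\pi$ of $V_n$ and $\pi'$ of $V_{n+1}$. $\mathcal{E}$ is completely neutral if $(\mathcal{E}_n)_n$ are independent and each is exchangeable. $\mathcal{P}$ is the set of permutations of $V$ mapping each $V_n$ to itself, written $\sigma=(\sigma_n)$ with $\sigma_n=\sigma|_{V_n}$; $\sigma$ is uniform if the $\sigma_n$ are independent uniform permutations. $\sigma(E)=\{(\sigma(v),\sigma(w)):(v,w)\in E\}$, and $\sigma(\mathcal{E}_m)=\{(\sigma_m(v),\sigma_{m+1}(w)):(v,w)\in\mathcal{E}_m\}$. *)

theory Defs
  imports "HOL-Probability.Probability" "HOL-Combinatorics.Permutations"
begin

text \<open>Vertices are pairs (n,i); edges are pairs of vertices. Generations are n with enat n < tau.\<close>

type_synonym vert = "nat \<times> nat"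
type_synonym edge = "vert \<times> vert"

definition Vg :: "(nat \<Rightarrow> nat) \<Rightarrow> nat \<Rightarrow> vert set" where
  "Vg X n = {n} \<times> {1..X n}"

definition Vall :: "enat \<Rightarrow> (nat \<Rightarrow> nat) \<Rightarrow> vert set" where
  "Vall \<tau> X = (\<Union>n\<in>{n. enat n < \<tau>}. Vg X n)"

definition layer :: "(nat \<Rightarrow> nat) \<Rightarrow> edge set \<Rightarrow> nat \<Rightarrow> edge set" where
  "layer X E n = E \<inter> (Vg X n \<times> Vg X (Suc n))"

definition od :: "edge set \<Rightarrow> vert \<Rightarrow> nat" where
  "od E v = card {w. (v, w) \<in> E}"

definition Kvec :: "(nat \<Rightarrow> nat) \<Rightarrow> edge set \<Rightarrow> nat \<Rightarrow> (nat \<Rightarrow> nat)" where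
  "Kvec X E n = (\<lambda>i\<in>{1..X n}. od E (n, i))"

definition Xi :: "(nat \<Rightarrow> nat) \<Rightarrow> edge set \<Rightarrow> nat \<Rightarrow> vert set set" where
  "Xi X E n = {{w \<in> Vg X (Suc n). (v, w) \<in> E} | v. v \<in> Vg X n} - {{}}"

definition genealogy :: "enat \<Rightarrow> (nat \<Rightarrow> nat) \<Rightarrow> (nat \<Rightarrow> nat \<Rightarrow> nat) \<Rightarrow> edge set \<Rightarrow> bool" where
  "genealogy \<tau> X k E \<longleftrightarrow>
     E \<subseteq> (\<Union>n\<in>{n. enat (Suc n) < \<tau>}. Vg X n \<times> Vg X (Suc n)) \<and>
     (\<forall>n. enat (Suc n) < \<tau> \<longrightarrow>
        (\<forall>w\<in>Vg X (Suc n). \<exists>!v. v \<in> Vg X n \<and> (v, w) \<in> E) \<and>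
        (\<exists>p. p permutes {1..X n} \<and> (\<forall>i\<in>{1..X n}. od E (n, i) = k n (p i))))"

definition genealogy_data :: "enat \<Rightarrow> (nat \<Rightarrow> nat) \<Rightarrow> (nat \<Rightarrow> nat \<Rightarrow> nat) \<Rightarrow> bool" where
  "genealogy_data \<tau> X k \<longleftrightarrow>
     (\<forall>n. enat n < \<tau> \<longrightarrow> 0 < X n) \<and>
     (\<forall>n. enat (Suc n) < \<tau> \<longrightarrow> (\<Sum>i=1..X n. k n i) = X (Suc n))"

definition genealogy_model ::
  "'w measure \<Rightarrow> enat \<Rightarrow> (nat \<Rightarrow> nat) \<Rightarrow> (nat \<Rightarrow> nat \<Rightarrow> nat) \<Rightarrow> ('w \<Rightarrow> edge set) \<Rightarrow> bool" where
  "genealogy_model M \<tau> X k \<E> \<longleftrightarrow>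
     (\<forall>\<omega>\<in>space M. genealogy \<tau> X k (\<E> \<omega>)) \<and>
     (\<forall>n. enat (Suc n) < \<tau> \<longrightarrow> (\<lambda>\<omega>. layer X (\<E> \<omega>) n) \<in> M \<rightarrow>\<^sub>M count_space UNIV)"

text \<open>Independence of two random variables with possibly different value types
  (the library's indep_var requires equal types; this is its characterisation indep_var_eq).\<close>
definition indep_rv :: "'w measure \<Rightarrow> 'a measure \<Rightarrow> ('w \<Rightarrow> 'a) \<Rightarrow> 'b measure \<Rightarrow> ('w \<Rightarrow> 'b) \<Rightarrow> bool" where
  "indep_rv M S A T B \<longleftrightarrow>
     A \<in> M \<rightarrow>\<^sub>M S \<and> B \<in> M \<rightarrow>\<^sub>M T \<and>
     prob_space.indep_set M
       (sigma_sets (space M) {A -` U \<inter> space M | U. U \<in> sets S})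
       (sigma_sets (space M) {B -` U \<inter> space M | U. U \<in> sets T})"

abbreviation cs :: "'a measure" where "cs \<equiv> count_space UNIV"

definition forward_neutral ::
  "'w measure \<Rightarrow> enat \<Rightarrow> (nat \<Rightarrow> nat) \<Rightarrow> ('w \<Rightarrow> edge set) \<Rightarrow> bool" where
  "forward_neutral M \<tau> X \<E> \<longleftrightarrow>
     (\<forall>n. enat (Suc n) < \<tau> \<longrightarrow>
        (\<forall>p. p permutes {1..X n} \<longrightarrow>
           distr M cs (\<lambda>\<omega>. Kvec X (\<E> \<omega>) n) = distr M cs (\<lambda>\<omega>. Kvec X (\<E> \<omega>) n \<circ> p)) \<and>
        indep_rv M cs (\<lambda>\<omega>. Kvec X (\<E> \<omega>) n)
          (PiM {..<n} (\<lambda>_. cs)) (\<lambda>\<omega>. \<lambda>m\<in>{..<n}. layer X (\<E> \<omega>) m))"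

definition backward_neutral ::
  "'w measure \<Rightarrow> enat \<Rightarrow> (nat \<Rightarrow> nat) \<Rightarrow> ('w \<Rightarrow> edge set) \<Rightarrow> bool" where
  "backward_neutral M \<tau> X \<E> \<longleftrightarrow>
     (\<forall>n. enat (Suc n) < \<tau> \<longrightarrow>
        (\<forall>\<pi>. \<pi> permutes Vg X (Suc n) \<longrightarrow>
           distr M cs (\<lambda>\<omega>. Xi X (\<E> \<omega>) n) = distr M cs (\<lambda>\<omega>. (\<lambda>B. \<pi> ` B) ` Xi X (\<E> \<omega>) n)) \<and>
        indep_rv M cs (\<lambda>\<omega>. Xi X (\<E> \<omega>) n)
          (PiM {m. n < m \<and> enat (Suc m) < \<tau>} (\<lambda>_. cs))
          (\<lambda>\<omega>. \<lambda>m\<in>{m. n < m \<and> enat (Suc m) < \<tau>}. layer X (\<E> \<omega>) m))"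

definition exchangeable_layer ::
  "'w measure \<Rightarrow> (nat \<Rightarrow> nat) \<Rightarrow> ('w \<Rightarrow> edge set) \<Rightarrow> nat \<Rightarrow> bool" where
  "exchangeable_layer M X \<E> n \<longleftrightarrow>
     (\<forall>\<pi> \<pi>'. \<pi> permutes Vg X n \<longrightarrow> \<pi>' permutes Vg X (Suc n) \<longrightarrow>
        distr M cs (\<lambda>\<omega>. layer X (\<E> \<omega>) n) =
        distr M cs (\<lambda>\<omega>. map_prod \<pi> \<pi>' ` layer X (\<E> \<omega>) n))"

definition completely_neutral ::
  "'w measure \<Rightarrow> enat \<Rightarrow> (nat \<Rightarrow> nat) \<Rightarrow> ('w \<Rightarrow> edge set) \<Rightarrow> bool" where
  "completely_neutral M \<tau> X \<E> \<longleftrightarrow>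
     prob_space.indep_vars M (\<lambda>_. cs) (\<lambda>n \<omega>. layer X (\<E> \<omega>) n) {n. enat (Suc n) < \<tau>} \<and>
     (\<forall>n. enat (Suc n) < \<tau> \<longrightarrow> exchangeable_layer M X \<E> n)"

definition sig :: "(nat \<Rightarrow> nat) \<Rightarrow> ('w \<Rightarrow> vert \<Rightarrow> vert) \<Rightarrow> nat \<Rightarrow> 'w \<Rightarrow> vert \<Rightarrow> vert" where
  "sig X \<sigma> n \<omega> = (\<lambda>x. if x \<in> Vg X n then \<sigma> \<omega> x else x)"

text \<open>sigma is a random element of P (permutations of V preserving each V_n)
  that is uniform: the sigma_n are independent uniform permutations of V_n.\<close>
definition uniform_P :: "'w measure \<Rightarrow> enat \<Rightarrow> (nat \<Rightarrow> nat) \<Rightarrow> ('w \<Rightarrow> vert \<Rightarrow> vert) \<Rightarrow> bool" where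
  "uniform_P M \<tau> X \<sigma> \<longleftrightarrow>
     (\<forall>\<omega>\<in>space M. \<sigma> \<omega> permutes Vall \<tau> X \<and> (\<forall>n. enat n < \<tau> \<longrightarrow> \<sigma> \<omega> ` Vg X n = Vg X n)) \<and>
     prob_space.indep_vars M (\<lambda>_. cs) (sig X \<sigma>) {n. enat n < \<tau>} \<and>
     (\<forall>n. enat n < \<tau> \<longrightarrow>
        distr M cs (sig X \<sigma> n) = measure_pmf (pmf_of_set {p. p permutes Vg X n}))"

definition perm_edges :: "(vert \<Rightarrow> vert) \<Rightarrow> edge set \<Rightarrow> edge set" where
  "perm_edges s E = map_prod s s ` E"

definition sig_layer :: "(nat \<Rightarrow> nat) \<Rightarrow> ('w \<Rightarrow> vert \<Rightarrow> vert) \<Rightarrow> ('w \<Rightarrow> edge set) \<Rightarrow> nat \<Rightarrow> 'w \<Rightarrow> edge set" where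
  "sig_layer X \<sigma> \<E> m \<omega> = map_prod (sig X \<sigma> m \<omega>) (sig X \<sigma> (Suc m) \<omega>) ` layer X (\<E> \<omega>) m"

end

theory Submission
  imports Defs
begin

text \<open>
  Write \<open>T n = (\<sigma>\<^sub>n \<times> \<sigma>\<^sub>n\<^sub>+\<^sub>1)(\<E>\<^sub>n)\<close> for the relabelled layers. Conditionally on all layers and
  relabellings except one uniform relabelling, the probability that \<open>T N\<close> equals a given edge set is
  the number of relabellings that carry the (partially relabelled) layer to it, divided by the number
  of all relabellings. In the forward neutral case the free relabelling is \<open>\<sigma>\<^sub>N\<^sub>+\<^sub>1\<close>, and the count
  depends on \<open>\<E>\<^sub>N\<close> only through its offspring vector \<open>K\<^sub>N\<close> permuted by \<open>\<sigma>\<^sub>N\<close>; in the backward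
  neutral case it is \<open>\<sigma>\<^sub>N\<close>, and the count depends only on the sibling partition \<open>\<Xi>\<^sub>N\<close> moved by
  \<open>\<sigma>\<^sub>N\<^sub>+\<^sub>1\<close>. Since this statistic is exchangeable and independent of the conditioning layers, the
  conditional probability is a constant, i.e. \<open>T N\<close> is independent of the conditioning variables.
  Peeling off the last (forward) or first (backward) layer of a finite set of layers gives the
  factorisations behind parts 1 and 2. Exchangeability of each \<open>T n\<close> needs no neutrality: it
  holds because \<open>\<sigma>\<^sub>n\<close> and \<open>\<sigma>\<^sub>n\<^sub>+\<^sub>1\<close> are uniform and independent of \<open>\<E>\<^sub>n\<close>.
\<close>

section \<open>Finite-valued random variables\<close>

lemma restrict_eq_iff: "restrict f A = g \<longleftrightarrow> g \<in> extensional A \<and> (\<forall>x\<in>A. f x = g x)"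
  by (auto simp: extensional_def fun_eq_iff)

lemma sets_PiM_cylinder:
  assumes "finite J" "J \<subseteq> I"
  shows "{x \<in> space (PiM I (\<lambda>_. count_space UNIV)). \<forall>j\<in>J. x j \<in> A j} \<in> sets (PiM I (\<lambda>_. count_space UNIV))"
proof (rule sets.sets_Collect_finite_All[OF _ assms(1)])
  fix j assume "j \<in> J"
  then have "(\<lambda>x. x j) -` A j \<inter> space (PiM I (\<lambda>_. count_space UNIV)) \<in> sets (PiM I (\<lambda>_. count_space UNIV))"
    using assms(2) by (intro measurable_sets[OF measurable_component_singleton]) auto
  then show "{x \<in> space (PiM I (\<lambda>_. count_space UNIV)). x j \<in> A j} \<in> sets (PiM I (\<lambda>_. count_space UNIV))"
    by (simp add: Int_def conj_commute)
qed

context prob_space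
begin

lemma simple_function_of_finite_range:
  assumes "Y \<in> M \<rightarrow>\<^sub>M count_space UNIV" "finite R" "\<And>\<omega>. \<omega> \<in> space M \<Longrightarrow> Y \<omega> \<in> R"
  shows "simple_function M Y"
  using assms by (auto simp: simple_function_eq_measurable intro: finite_subset)

lemma events_Collect_simple_function:
  assumes "simple_function M Y"
  shows "{\<omega>\<in>space M. P (Y \<omega>)} \<in> events"
proof -
  have "Y -` {y. P y} \<inter> space M \<in> events" by (rule simple_functionD(2)[OF assms])
  moreover have "Y -` {y. P y} \<inter> space M = {\<omega>\<in>space M. P (Y \<omega>)}" by auto
  ultimately show ?thesis by simp
qed

lemma simple_function_restrict:
  assumes "finite I" and Y: "\<And>i. i \<in> I \<Longrightarrow> simple_function M (Y i)"
  shows "simple_function M (\<lambda>\<omega>. \<lambda>i\<in>I. Y i \<omega>)"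
  unfolding simple_function_def
proof
  show "finite ((\<lambda>\<omega>. \<lambda>i\<in>I. Y i \<omega>) ` space M)"
    by (rule finite_subset[of _ "PiE I (\<lambda>i. Y i ` space M)"])
      (use assms in \<open>auto intro!: finite_PiE simp: simple_functionD(1)\<close>)
  show "\<forall>y\<in>(\<lambda>\<omega>. \<lambda>i\<in>I. Y i \<omega>) ` space M. (\<lambda>\<omega>. \<lambda>i\<in>I. Y i \<omega>) -` {y} \<inter> space M \<in> events"
  proof
    fix y assume "y \<in> (\<lambda>\<omega>. \<lambda>i\<in>I. Y i \<omega>) ` space M"
    then have "(\<lambda>\<omega>. \<lambda>i\<in>I. Y i \<omega>) -` {y} \<inter> space M = {\<omega>\<in>space M. \<forall>i\<in>I. Y i \<omega> = y i}"
      by (auto simp: fun_eq_iff) metis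
    also have "\<dots> \<in> events"
      using assms by (intro sets.sets_Collect_finite_All events_Collect_simple_function) auto
    finally show "(\<lambda>\<omega>. \<lambda>i\<in>I. Y i \<omega>) -` {y} \<inter> space M \<in> events" .
  qed
qed

lemma prob_Collect_eq_sum_points:
  assumes W: "simple_function M W" and R: "finite R" "W ` space M \<subseteq> R" and B: "B \<in> events"
  shows "prob {\<omega>\<in>B. W \<omega> \<in> A} = (\<Sum>w\<in>R \<inter> A. prob {\<omega>\<in>B. W \<omega> = w})"
proof -
  have "{\<omega>\<in>B. W \<omega> \<in> A} = (\<Union>w\<in>R \<inter> A. {\<omega>\<in>B. W \<omega> = w})"
    using R(2) sets.sets_into_space[OF B] by auto
  moreover have "{\<omega>\<in>B. W \<omega> = w} = B \<inter> {\<omega>\<in>space M. W \<omega> = w}" for w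
    using sets.sets_into_space[OF B] by auto
  ultimately show ?thesis
    using R(1) B events_Collect_simple_function[OF W]
    by (simp only:) (intro finite_measure_finite_Union, auto simp: disjoint_family_on_def)
qed

lemma integral_indicator_mult_eq_sum:
  fixes g :: "'b \<Rightarrow> real"
  assumes Y: "simple_function M Y" and R: "finite R" "Y ` space M \<subseteq> R" and A: "A \<in> events"
  shows "(\<integral>\<omega>. indicator A \<omega> * g (Y \<omega>) \<partial>M) = (\<Sum>y\<in>R. g y * prob (A \<inter> {\<omega>\<in>space M. Y \<omega> = y}))"
proof -
  have "(\<integral>\<omega>. indicator A \<omega> * g (Y \<omega>) \<partial>M) =
      (\<integral>\<omega>. (\<Sum>y\<in>R. g y * indicator (A \<inter> {\<omega>\<in>space M. Y \<omega> = y}) \<omega>) \<partial>M)"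
  proof (rule Bochner_Integration.integral_cong[OF refl])
    fix \<omega> assume "\<omega> \<in> space M"
    have "(\<Sum>y\<in>R. g y * indicator (A \<inter> {\<omega>\<in>space M. Y \<omega> = y}) \<omega>) =
        (\<Sum>y\<in>R. if y = Y \<omega> then g y * indicator A \<omega> else 0)"
      using \<open>\<omega> \<in> space M\<close> by (intro sum.cong) (auto simp: indicator_def)
    also have "\<dots> = indicator A \<omega> * g (Y \<omega>)"
      using \<open>\<omega> \<in> space M\<close> R by (auto simp: sum.delta')
    finally show "indicator A \<omega> * g (Y \<omega>) = (\<Sum>y\<in>R. g y * indicator (A \<inter> {\<omega>\<in>space M. Y \<omega> = y}) \<omega>)" ..
  qed
  also have "\<dots> = (\<Sum>y\<in>R. g y * prob (A \<inter> {\<omega>\<in>space M. Y \<omega> = y}))"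
    using A events_Collect_simple_function[OF Y]
    by (subst Bochner_Integration.integral_sum) (auto simp: emeasure_eq_measure)
  finally show ?thesis .
qed

lemma sum_prob_eq_integral_card:
  assumes Q: "finite Q" and A: "A \<in> events" and P: "\<And>q. q \<in> Q \<Longrightarrow> {\<omega>\<in>space M. P q \<omega>} \<in> events"
  shows "(\<Sum>q\<in>Q. prob (A \<inter> {\<omega>\<in>space M. P q \<omega>})) = (\<integral>\<omega>. indicator A \<omega> * real (card {q\<in>Q. P q \<omega>}) \<partial>M)"
proof -
  have "(\<integral>\<omega>. indicator A \<omega> * real (card {q\<in>Q. P q \<omega>}) \<partial>M) =
      (\<integral>\<omega>. (\<Sum>q\<in>Q. indicator (A \<inter> {\<omega>\<in>space M. P q \<omega>}) \<omega>) \<partial>M)"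
  proof (rule Bochner_Integration.integral_cong[OF refl])
    fix \<omega> assume "\<omega> \<in> space M"
    have "real (card {q\<in>Q. P q \<omega>}) = (\<Sum>q\<in>Q. of_bool (P q \<omega>))"
      using Q by (simp add: sum.If_cases Int_def)
    then show "indicator A \<omega> * real (card {q\<in>Q. P q \<omega>}) = (\<Sum>q\<in>Q. indicator (A \<inter> {\<omega>\<in>space M. P q \<omega>}) \<omega>)"
      using \<open>\<omega> \<in> space M\<close> by (simp add: sum_distrib_left indicator_def)
  qed
  also have "\<dots> = (\<Sum>q\<in>Q. prob (A \<inter> {\<omega>\<in>space M. P q \<omega>}))"
    using A P by (subst Bochner_Integration.integral_sum) (auto simp: emeasure_eq_measure)
  finally show ?thesis ..
qed

lemma integral_indicator_mult_indep:
  fixes g :: "'b \<Rightarrow> real"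
  assumes ind: "indep_rv M (count_space UNIV) Y N Z" and Y: "simple_function M Y" and U: "U \<in> sets N"
  shows "(\<integral>\<omega>. indicator (Z -` U \<inter> space M) \<omega> * g (Y \<omega>) \<partial>M) =
    prob (Z -` U \<inter> space M) * (\<integral>\<omega>. g (Y \<omega>) \<partial>M)"
proof -
  let ?A = "Z -` U \<inter> space M" and ?R = "Y ` space M"
  have R: "finite ?R" using simple_functionD(1)[OF Y] .
  have A: "?A \<in> events" using ind U unfolding indep_rv_def by (auto intro: measurable_sets)
  have fac: "prob (?A \<inter> {\<omega>\<in>space M. Y \<omega> = y}) = prob ?A * prob {\<omega>\<in>space M. Y \<omega> = y}" for y
  proof -
    have "{\<omega>\<in>space M. Y \<omega> = y} = Y -` {y} \<inter> space M" by auto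
    then have "prob ({\<omega>\<in>space M. Y \<omega> = y} \<inter> ?A) = prob {\<omega>\<in>space M. Y \<omega> = y} * prob ?A"
      using ind U unfolding indep_rv_def by (auto intro!: indep_setD sigma_sets.Basic)
    then show ?thesis by (simp add: Int_commute mult.commute)
  qed
  have "(\<integral>\<omega>. indicator ?A \<omega> * g (Y \<omega>) \<partial>M) = (\<Sum>y\<in>?R. g y * prob (?A \<inter> {\<omega>\<in>space M. Y \<omega> = y}))"
    using integral_indicator_mult_eq_sum[OF Y R _ A] by simp
  also have "\<dots> = prob ?A * (\<Sum>y\<in>?R. g y * prob (space M \<inter> {\<omega>\<in>space M. Y \<omega> = y}))"
    by (simp add: fac sum_distrib_left Int_absorb1 mult.left_commute)
  also have "(\<Sum>y\<in>?R. g y * prob (space M \<inter> {\<omega>\<in>space M. Y \<omega> = y})) = (\<integral>\<omega>. g (Y \<omega>) \<partial>M)"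
    using integral_indicator_mult_eq_sum[OF Y R _ sets.top, of g]
    by (simp add: indicator_def cong: Bochner_Integration.integral_cong)
  finally show ?thesis .
qed

lemma integral_eq_of_distr_eq:
  fixes g :: "'b \<Rightarrow> real"
  assumes Y: "simple_function M Y" and f: "distr M (count_space UNIV) (\<lambda>\<omega>. f (Y \<omega>)) = distr M (count_space UNIV) Y"
  shows "(\<integral>\<omega>. g (f (Y \<omega>)) \<partial>M) = (\<integral>\<omega>. g (Y \<omega>) \<partial>M)"
proof -
  have Yf: "simple_function M (\<lambda>\<omega>. f (Y \<omega>))" using simple_function_compose1[OF Y] .
  have "(\<integral>\<omega>. g (f (Y \<omega>)) \<partial>M) = integral\<^sup>L (distr M (count_space UNIV) (\<lambda>\<omega>. f (Y \<omega>))) g"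
    using measurable_simple_function[OF Yf] by (simp add: integral_distr)
  also have "\<dots> = (\<integral>\<omega>. g (Y \<omega>) \<partial>M)"
    using measurable_simple_function[OF Y] by (simp add: f integral_distr)
  finally show ?thesis .
qed

lemma integral_indicator_cylinder_mult_indep:
  fixes g :: "'b \<Rightarrow> real"
  assumes ind: "indep_rv M (count_space UNIV) Y (PiM I (\<lambda>_. count_space UNIV)) (\<lambda>\<omega>. \<lambda>i\<in>I. Z i \<omega>)"
    and Y: "simple_function M Y" and J: "finite J" "J \<subseteq> I"
  shows "(\<integral>\<omega>. indicator {\<omega>\<in>space M. \<forall>j\<in>J. Z j \<omega> \<in> B j} \<omega> * g (Y \<omega>) \<partial>M) =
    prob {\<omega>\<in>space M. \<forall>j\<in>J. Z j \<omega> \<in> B j} * (\<integral>\<omega>. g (Y \<omega>) \<partial>M)"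
proof -
  let ?U = "{x \<in> space (PiM I (\<lambda>_. count_space UNIV)). \<forall>j\<in>J. x j \<in> B j}"
  have eq: "(\<lambda>\<omega>. \<lambda>i\<in>I. Z i \<omega>) -` ?U \<inter> space M = {\<omega>\<in>space M. \<forall>j\<in>J. Z j \<omega> \<in> B j}"
    using J(2) by (auto simp: space_PiM)
  show ?thesis
    using integral_indicator_mult_indep[OF ind Y sets_PiM_cylinder[OF J, of B], where g=g] unfolding eq .
qed

lemma integral_indicator_cylinder_mult_exchangeable:
  fixes g :: "'b \<Rightarrow> real"
  assumes ind: "indep_rv M (count_space UNIV) Y (PiM I (\<lambda>_. count_space UNIV)) (\<lambda>\<omega>. \<lambda>i\<in>I. Z i \<omega>)"
    and Y: "simple_function M Y" and J: "finite J" "J \<subseteq> I"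
    and f: "distr M (count_space UNIV) (\<lambda>\<omega>. f (Y \<omega>)) = distr M (count_space UNIV) Y"
  shows "(\<integral>\<omega>. indicator {\<omega>\<in>space M. \<forall>j\<in>J. Z j \<omega> \<in> B j} \<omega> * g (f (Y \<omega>)) \<partial>M) =
    prob {\<omega>\<in>space M. \<forall>j\<in>J. Z j \<omega> \<in> B j} * (\<integral>\<omega>. g (Y \<omega>) \<partial>M)"
  using integral_indicator_cylinder_mult_indep[OF ind Y J, where g="\<lambda>y. g (f y)"]
    integral_eq_of_distr_eq[OF Y f] by simp

lemma prob_conj_eq_mult_of_points:
  assumes W: "simple_function M W" and P: "{\<omega>\<in>space M. P \<omega>} \<in> events"
    and points: "\<And>w. prob {\<omega>\<in>space M. P \<omega> \<and> W \<omega> = w} = c * prob {\<omega>\<in>space M. W \<omega> = w}"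
  shows "prob {\<omega>\<in>space M. P \<omega> \<and> W \<omega> \<in> A} = prob {\<omega>\<in>space M. P \<omega>} * prob {\<omega>\<in>space M. W \<omega> \<in> A}"
proof -
  let ?R = "W ` space M"
  have R: "finite ?R" using simple_functionD(1)[OF W] .
  have sum: "prob {\<omega>\<in>space M. P \<omega> \<and> W \<omega> \<in> B} = c * prob {\<omega>\<in>space M. W \<omega> \<in> B}" for B
  proof -
    have "prob {\<omega>\<in>{\<omega>\<in>space M. P \<omega>}. W \<omega> \<in> B} = (\<Sum>w\<in>?R \<inter> B. prob {\<omega>\<in>{\<omega>\<in>space M. P \<omega>}. W \<omega> = w})"
      by (rule prob_Collect_eq_sum_points[OF W R _ P]) simp
    also have "\<dots> = c * (\<Sum>w\<in>?R \<inter> B. prob {\<omega>\<in>space M. W \<omega> = w})"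
    proof -
      have "{\<omega>\<in>{\<omega>\<in>space M. P \<omega>}. W \<omega> = w} = {\<omega>\<in>space M. P \<omega> \<and> W \<omega> = w}" for w by auto
      then show ?thesis by (simp only: points sum_distrib_left)
    qed
    also have "(\<Sum>w\<in>?R \<inter> B. prob {\<omega>\<in>space M. W \<omega> = w}) = prob {\<omega>\<in>space M. W \<omega> \<in> B}"
      by (rule prob_Collect_eq_sum_points[OF W R _ sets.top, symmetric]) simp
    finally show ?thesis by simp
  qed
  show ?thesis using sum[of A] sum[of UNIV] by (simp add: prob_space)
qed

lemma distr_eq_of_prob_points:
  assumes Y: "simple_function M Y" and Z: "simple_function M Z"
    and points: "\<And>y. prob {\<omega>\<in>space M. Y \<omega> = y} = prob {\<omega>\<in>space M. Z \<omega> = y}"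
  shows "distr M (count_space UNIV) Y = distr M (count_space UNIV) Z"
proof (rule measure_eqI)
  fix A :: "'b set"
  let ?R = "Y ` space M \<union> Z ` space M"
  have R: "finite ?R" using simple_functionD(1)[OF Y] simple_functionD(1)[OF Z] by simp
  have "prob (Y -` A \<inter> space M) = prob {\<omega>\<in>space M. Y \<omega> \<in> A}" by (simp add: Int_def conj_commute)
  also have "\<dots> = (\<Sum>y\<in>?R \<inter> A. prob {\<omega>\<in>space M. Y \<omega> = y})"
    by (rule prob_Collect_eq_sum_points[OF Y R _ sets.top]) auto
  also have "\<dots> = (\<Sum>y\<in>?R \<inter> A. prob {\<omega>\<in>space M. Z \<omega> = y})" by (simp add: points)
  also have "\<dots> = prob {\<omega>\<in>space M. Z \<omega> \<in> A}"
    by (rule prob_Collect_eq_sum_points[OF Z R _ sets.top, symmetric]) auto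
  also have "\<dots> = prob (Z -` A \<inter> space M)" by (simp add: Int_def conj_commute)
  finally show "emeasure (distr M (count_space UNIV) Y) A = emeasure (distr M (count_space UNIV) Z) A"
    using measurable_simple_function[OF Y] measurable_simple_function[OF Z]
    by (simp add: emeasure_distr emeasure_eq_measure)
qed simp

lemma prob_restrict_eq:
  "prob {\<omega>\<in>space M. (\<lambda>j\<in>J. Y j \<omega>) = y} =
    (if y \<in> extensional J then prob {\<omega>\<in>space M. \<forall>j\<in>J. Y j \<omega> = y j} else 0)"
proof -
  have "{\<omega>\<in>space M. (\<lambda>j\<in>J. Y j \<omega>) = y} =
      (if y \<in> extensional J then {\<omega>\<in>space M. \<forall>j\<in>J. Y j \<omega> = y j} else {})"
    by (auto simp: restrict_eq_iff)
  then show ?thesis by simp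
qed

lemma prob_cylinder_eq_sum_points:
  assumes "finite J" and Y: "\<And>j. j \<in> J \<Longrightarrow> simple_function M (Y j)"
  shows "prob {\<omega>\<in>space M. \<forall>j\<in>J. Y j \<omega> \<in> A j} =
    (\<Sum>y\<in>PiE J (\<lambda>j. Y j ` space M \<inter> A j). prob {\<omega>\<in>space M. \<forall>j\<in>J. Y j \<omega> = y j})"
proof -
  let ?V = "\<lambda>\<omega>. \<lambda>j\<in>J. Y j \<omega>" and ?R = "PiE J (\<lambda>j. Y j ` space M)"
  have V: "simple_function M ?V" using simple_function_restrict[OF assms] .
  have R: "finite ?R" using assms by (intro finite_PiE) (auto simp: simple_functionD(1))
  have "prob {\<omega>\<in>space M. \<forall>j\<in>J. Y j \<omega> \<in> A j} = prob {\<omega>\<in>space M. ?V \<omega> \<in> PiE J A}"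
    by (simp only: restrict_PiE_iff)
  also have "\<dots> = (\<Sum>y\<in>?R \<inter> PiE J A. prob {\<omega>\<in>space M. ?V \<omega> = y})"
    by (rule prob_Collect_eq_sum_points[OF V R _ sets.top]) auto
  also have "\<dots> = (\<Sum>y\<in>PiE J (\<lambda>j. Y j ` space M \<inter> A j). prob {\<omega>\<in>space M. \<forall>j\<in>J. Y j \<omega> = y j})"
    by (intro sum.cong) (auto simp: PiE_Int prob_restrict_eq PiE_iff)
  finally show ?thesis .
qed

lemma indep_vars_of_prob_points:
  assumes Y: "\<And>i. i \<in> I \<Longrightarrow> simple_function M (Y i)"
    and points: "\<And>J t. J \<subseteq> I \<Longrightarrow> finite J \<Longrightarrow> J \<noteq> {} \<Longrightarrow>
      prob {\<omega>\<in>space M. \<forall>j\<in>J. Y j \<omega> = t j} = (\<Prod>j\<in>J. prob {\<omega>\<in>space M. Y j \<omega> = t j})"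
  shows "indep_vars (\<lambda>_. count_space UNIV) Y I"
  unfolding indep_vars_def2
proof (intro conjI ballI indep_setsI)
  fix i assume "i \<in> I"
  then show "random_variable (count_space UNIV) (Y i)" by (rule measurable_simple_function[OF Y])
  then show "{Y i -` A \<inter> space M |A. A \<in> sets (count_space UNIV)} \<subseteq> events" by auto
next
  fix A J assume J: "J \<noteq> {}" "J \<subseteq> I" "finite J"
    and A: "\<forall>j\<in>J. A j \<in> {Y j -` U \<inter> space M |U. U \<in> sets (count_space UNIV)}"
  then obtain U where U: "\<And>j. j \<in> J \<Longrightarrow> A j = Y j -` U j \<inter> space M" by simp metis
  have YJ: "\<And>j. j \<in> J \<Longrightarrow> simple_function M (Y j)" using J Y by auto
  have "prob (\<Inter>j\<in>J. A j) = prob {\<omega>\<in>space M. \<forall>j\<in>J. Y j \<omega> \<in> U j}"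
    using J U by (intro arg_cong[where f=prob]) auto
  also have "\<dots> = (\<Sum>y\<in>PiE J (\<lambda>j. Y j ` space M \<inter> U j). \<Prod>j\<in>J. prob {\<omega>\<in>space M. Y j \<omega> = y j})"
    using J by (simp add: prob_cylinder_eq_sum_points[OF J(3) YJ] points)
  also have "\<dots> = (\<Prod>j\<in>J. \<Sum>y\<in>Y j ` space M \<inter> U j. prob {\<omega>\<in>space M. Y j \<omega> = y})"
    using J YJ by (subst prod_sum_PiE) (auto simp: simple_functionD(1))
  also have "\<dots> = (\<Prod>j\<in>J. prob (A j))"
  proof (rule prod.cong[OF refl])
    fix j assume "j \<in> J"
    have "(\<Sum>y\<in>Y j ` space M \<inter> U j. prob {\<omega>\<in>space M. Y j \<omega> = y}) = prob {\<omega>\<in>space M. Y j \<omega> \<in> U j}"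
      using \<open>j \<in> J\<close> YJ by (intro prob_Collect_eq_sum_points[symmetric]) (auto simp: simple_functionD(1))
    then show "(\<Sum>y\<in>Y j ` space M \<inter> U j. prob {\<omega>\<in>space M. Y j \<omega> = y}) = prob (A j)"
      using U[OF \<open>j \<in> J\<close>] by (simp add: Int_def conj_commute)
  qed
  finally show "prob (\<Inter>j\<in>J. A j) = (\<Prod>j\<in>J. prob (A j))" .
qed

lemma prob_conj_mem_eq_mult_of_points:
  assumes U: "simple_function M U" and V: "simple_function M V"
    and points: "\<And>u v. prob {\<omega>\<in>space M. U \<omega> = u \<and> V \<omega> = v} = prob {\<omega>\<in>space M. U \<omega> = u} * prob {\<omega>\<in>space M. V \<omega> = v}"
  shows "prob {\<omega>\<in>space M. U \<omega> \<in> A \<and> V \<omega> \<in> B} = prob {\<omega>\<in>space M. U \<omega> \<in> A} * prob {\<omega>\<in>space M. V \<omega> \<in> B}"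
proof (rule prob_conj_eq_mult_of_points[OF V events_Collect_simple_function[OF U]])
  fix v
  let ?R = "U ` space M" and ?Bv = "{\<omega>\<in>space M. V \<omega> = v}"
  have R: "finite ?R" using simple_functionD(1)[OF U] .
  have "prob {\<omega>\<in>space M. U \<omega> \<in> A \<and> V \<omega> = v} = prob {\<omega>\<in>?Bv. U \<omega> \<in> A}"
    by (intro arg_cong[where f=prob]) auto
  also have "\<dots> = (\<Sum>u\<in>?R \<inter> A. prob {\<omega>\<in>?Bv. U \<omega> = u})"
    by (rule prob_Collect_eq_sum_points[OF U R _ events_Collect_simple_function[OF V]]) simp
  also have "\<dots> = (\<Sum>u\<in>?R \<inter> A. prob {\<omega>\<in>space M. U \<omega> = u}) * prob ?Bv"
  proof -
    have "{\<omega>\<in>?Bv. U \<omega> = u} = {\<omega>\<in>space M. U \<omega> = u \<and> V \<omega> = v}" for u by auto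
    then show ?thesis by (simp only: points sum_distrib_right)
  qed
  also have "(\<Sum>u\<in>?R \<inter> A. prob {\<omega>\<in>space M. U \<omega> = u}) = prob {\<omega>\<in>space M. U \<omega> \<in> A}"
    by (rule prob_Collect_eq_sum_points[OF U R _ sets.top, symmetric]) simp
  finally show "prob {\<omega>\<in>space M. U \<omega> \<in> A \<and> V \<omega> = v} = prob {\<omega>\<in>space M. U \<omega> \<in> A} * prob ?Bv" .
qed

definition cylinder_events :: "'i set \<Rightarrow> ('i \<Rightarrow> 'a \<Rightarrow> 'b) \<Rightarrow> 'a set set" where
  "cylinder_events I Y = {{\<omega>\<in>space M. \<forall>j\<in>J. Y j \<omega> \<in> A j} | J A. finite J \<and> J \<subseteq> I}"

lemma cylinder_eventsE:
  assumes "a \<in> cylinder_events I Y"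
  obtains J A where "a = {\<omega>\<in>space M. \<forall>j\<in>J. Y j \<omega> \<in> A j}" "finite J" "J \<subseteq> I"
  using assms unfolding cylinder_events_def by auto

lemma cylinder_eventsI: "finite J \<Longrightarrow> J \<subseteq> I \<Longrightarrow> {\<omega>\<in>space M. \<forall>j\<in>J. Y j \<omega> \<in> A j} \<in> cylinder_events I Y"
  unfolding cylinder_events_def by auto

lemma Int_stable_cylinder_events: "Int_stable (cylinder_events I Y)"
proof (rule Int_stableI)
  fix a b assume a: "a \<in> cylinder_events I Y" and b: "b \<in> cylinder_events I Y"
  from a obtain J A where a: "a = {\<omega>\<in>space M. \<forall>j\<in>J. Y j \<omega> \<in> A j}" "finite J" "J \<subseteq> I"
    by (rule cylinder_eventsE)
  from b obtain J' B where b: "b = {\<omega>\<in>space M. \<forall>j\<in>J'. Y j \<omega> \<in> B j}" "finite J'" "J' \<subseteq> I"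
    by (rule cylinder_eventsE)
  let ?C = "\<lambda>j. (if j \<in> J then A j else UNIV) \<inter> (if j \<in> J' then B j else UNIV)"
  have "a \<inter> b = {\<omega>\<in>space M. \<forall>j\<in>J \<union> J'. Y j \<omega> \<in> ?C j}" using a b by auto
  moreover have "{\<omega>\<in>space M. \<forall>j\<in>J \<union> J'. Y j \<omega> \<in> ?C j} \<in> cylinder_events I Y"
    using a b by (intro cylinder_eventsI) auto
  ultimately show "a \<inter> b \<in> cylinder_events I Y" by simp
qed

lemma cylinder_events_subset_events:
  assumes Y: "\<And>i. i \<in> I \<Longrightarrow> simple_function M (Y i)"
  shows "cylinder_events I Y \<subseteq> events"
proof
  fix a assume "a \<in> cylinder_events I Y"
  then obtain J A where a: "a = {\<omega>\<in>space M. \<forall>j\<in>J. Y j \<omega> \<in> A j}" "finite J" "J \<subseteq> I"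
    by (rule cylinder_eventsE)
  have "{\<omega>\<in>space M. Y j \<omega> \<in> A j} \<in> events" if "j \<in> I" for j
    using events_Collect_simple_function[OF Y[OF that], of "\<lambda>y. y \<in> A j"] .
  with a show "a \<in> events" by (simp add: sets.sets_Collect_finite_All subset_iff)
qed

lemma sigma_sets_vimage_restrict_subset:
  "sigma_sets (space M) {(\<lambda>\<omega>. \<lambda>i\<in>I. Y i \<omega>) -` U \<inter> space M | U. U \<in> sets (PiM I (\<lambda>_. count_space UNIV))}
    \<subseteq> sigma_sets (space M) (cylinder_events I Y)"
proof (rule sigma_sets_mono)
  let ?N = "sigma (space M) (cylinder_events I Y)"
  have sp: "cylinder_events I Y \<subseteq> Pow (space M)" unfolding cylinder_events_def by auto
  have "(\<lambda>\<omega>. \<lambda>i\<in>I. Y i \<omega>) \<in> ?N \<rightarrow>\<^sub>M PiM I (\<lambda>_. count_space UNIV)"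
  proof (rule measurable_restrict)
    fix i assume "i \<in> I"
    show "Y i \<in> ?N \<rightarrow>\<^sub>M count_space UNIV"
    proof (rule measurableI)
      fix U
      have "Y i -` U \<inter> space M = {\<omega>\<in>space M. \<forall>j\<in>{i}. Y j \<omega> \<in> U}" by auto
      moreover have "{\<omega>\<in>space M. \<forall>j\<in>{i}. Y j \<omega> \<in> U} \<in> cylinder_events I Y"
        using \<open>i \<in> I\<close> by (intro cylinder_eventsI) auto
      ultimately have "Y i -` U \<inter> space M \<in> cylinder_events I Y" by simp
      then show "Y i -` U \<inter> space ?N \<in> sets ?N" using sp by auto
    qed (use sp in auto)
  qed
  from measurable_sets[OF this] show "{(\<lambda>\<omega>. \<lambda>i\<in>I. Y i \<omega>) -` U \<inter> space M | U. U \<in> sets (PiM I (\<lambda>_. count_space UNIV))}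
    \<subseteq> sigma_sets (space M) (cylinder_events I Y)"
    using sp by auto
qed

lemma indep_set_mono: "indep_set A B \<Longrightarrow> A' \<subseteq> A \<Longrightarrow> B' \<subseteq> B \<Longrightarrow> indep_set A' B'"
  unfolding indep_set_def by (rule indep_sets_mono_sets) (auto split: bool.split)

lemma indep_rv_of_prob_cylinders:
  assumes Y: "\<And>i. i \<in> I \<Longrightarrow> simple_function M (Y i)" and Z: "\<And>i. i \<in> I' \<Longrightarrow> simple_function M (Z i)"
    and points: "\<And>J J' t u. J \<subseteq> I \<Longrightarrow> finite J \<Longrightarrow> J' \<subseteq> I' \<Longrightarrow> finite J' \<Longrightarrow>
      prob {\<omega>\<in>space M. (\<forall>j\<in>J. Y j \<omega> = t j) \<and> (\<forall>j\<in>J'. Z j \<omega> = u j)} =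
      prob {\<omega>\<in>space M. \<forall>j\<in>J. Y j \<omega> = t j} * prob {\<omega>\<in>space M. \<forall>j\<in>J'. Z j \<omega> = u j}"
  shows "indep_rv M (PiM I (\<lambda>_. count_space UNIV)) (\<lambda>\<omega>. \<lambda>i\<in>I. Y i \<omega>)
    (PiM I' (\<lambda>_. count_space UNIV)) (\<lambda>\<omega>. \<lambda>i\<in>I'. Z i \<omega>)"
proof -
  have "indep_set (cylinder_events I Y) (cylinder_events I' Z)"
  proof (rule indep_setI[OF cylinder_events_subset_events[OF Y] cylinder_events_subset_events[OF Z]])
    fix a b assume "a \<in> cylinder_events I Y" "b \<in> cylinder_events I' Z"
    then obtain J A J' B where ab: "a = {\<omega>\<in>space M. \<forall>j\<in>J. Y j \<omega> \<in> A j}" "finite J" "J \<subseteq> I"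
      "b = {\<omega>\<in>space M. \<forall>j\<in>J'. Z j \<omega> \<in> B j}" "finite J'" "J' \<subseteq> I'"
      by (elim cylinder_eventsE)
    let ?U = "\<lambda>\<omega>. \<lambda>j\<in>J. Y j \<omega>" and ?V = "\<lambda>\<omega>. \<lambda>j\<in>J'. Z j \<omega>"
    have U: "simple_function M ?U" using ab Y by (intro simple_function_restrict) auto
    have V: "simple_function M ?V" using ab Z by (intro simple_function_restrict) auto
    have "prob {\<omega>\<in>space M. ?U \<omega> = t \<and> ?V \<omega> = u} = prob {\<omega>\<in>space M. ?U \<omega> = t} * prob {\<omega>\<in>space M. ?V \<omega> = u}"
      for t u
    proof (cases "t \<in> extensional J \<and> u \<in> extensional J'")
      case True
      then show ?thesis using points[OF ab(3,2,6,5)] by (simp add: restrict_eq_iff)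
    qed (auto simp: restrict_eq_iff)
    then have "prob {\<omega>\<in>space M. ?U \<omega> \<in> PiE J A \<and> ?V \<omega> \<in> PiE J' B} =
        prob {\<omega>\<in>space M. ?U \<omega> \<in> PiE J A} * prob {\<omega>\<in>space M. ?V \<omega> \<in> PiE J' B}"
      by (rule prob_conj_mem_eq_mult_of_points[OF U V])
    moreover have "a \<inter> b = {\<omega>\<in>space M. ?U \<omega> \<in> PiE J A \<and> ?V \<omega> \<in> PiE J' B}"
      unfolding ab restrict_PiE_iff by auto
    ultimately show "prob (a \<inter> b) = prob a * prob b" unfolding ab restrict_PiE_iff by simp
  qed
  then have "indep_set (sigma_sets (space M) (cylinder_events I Y)) (sigma_sets (space M) (cylinder_events I' Z))"
    by (rule indep_set_sigma_sets[OF _ Int_stable_cylinder_events Int_stable_cylinder_events])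
  then show ?thesis unfolding indep_rv_def
  proof (intro conjI)
    show "(\<lambda>\<omega>. \<lambda>i\<in>I. Y i \<omega>) \<in> M \<rightarrow>\<^sub>M PiM I (\<lambda>_. count_space UNIV)"
      by (rule measurable_restrict) (rule measurable_simple_function[OF Y])
    show "(\<lambda>\<omega>. \<lambda>i\<in>I'. Z i \<omega>) \<in> M \<rightarrow>\<^sub>M PiM I' (\<lambda>_. count_space UNIV)"
      by (rule measurable_restrict) (rule measurable_simple_function[OF Z])
  qed (rule indep_set_mono[OF _ sigma_sets_vimage_restrict_subset sigma_sets_vimage_restrict_subset])
qed

lemma indep_rv_prob_cylinders:
  assumes ind: "indep_rv M (PiM I (\<lambda>_. count_space UNIV)) (\<lambda>\<omega>. \<lambda>i\<in>I. Y i \<omega>)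
      (PiM I' (\<lambda>_. count_space UNIV)) (\<lambda>\<omega>. \<lambda>i\<in>I'. Z i \<omega>)"
    and J: "finite J" "J \<subseteq> I" and J': "finite J'" "J' \<subseteq> I'"
  shows "prob {\<omega>\<in>space M. (\<forall>j\<in>J. Y j \<omega> \<in> A j) \<and> (\<forall>j\<in>J'. Z j \<omega> \<in> B j)} =
    prob {\<omega>\<in>space M. \<forall>j\<in>J. Y j \<omega> \<in> A j} * prob {\<omega>\<in>space M. \<forall>j\<in>J'. Z j \<omega> \<in> B j}"
proof -
  let ?cY = "{x \<in> space (PiM I (\<lambda>_. count_space UNIV)). \<forall>j\<in>J. x j \<in> A j}"
  let ?cZ = "{x \<in> space (PiM I' (\<lambda>_. count_space UNIV)). \<forall>j\<in>J'. x j \<in> B j}"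
  have fac: "prob (((\<lambda>\<omega>. \<lambda>i\<in>I. Y i \<omega>) -` ?cY \<inter> space M) \<inter> ((\<lambda>\<omega>. \<lambda>i\<in>I'. Z i \<omega>) -` ?cZ \<inter> space M)) =
      prob ((\<lambda>\<omega>. \<lambda>i\<in>I. Y i \<omega>) -` ?cY \<inter> space M) * prob ((\<lambda>\<omega>. \<lambda>i\<in>I'. Z i \<omega>) -` ?cZ \<inter> space M)"
  proof (rule indep_setD)
    show "indep_set
      (sigma_sets (space M) {(\<lambda>\<omega>. \<lambda>i\<in>I. Y i \<omega>) -` U \<inter> space M | U. U \<in> sets (PiM I (\<lambda>_. count_space UNIV))})
      (sigma_sets (space M) {(\<lambda>\<omega>. \<lambda>i\<in>I'. Z i \<omega>) -` U \<inter> space M | U. U \<in> sets (PiM I' (\<lambda>_. count_space UNIV))})"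
      using ind unfolding indep_rv_def by blast
  qed (use sets_PiM_cylinder[OF J] sets_PiM_cylinder[OF J'] in \<open>blast intro: sigma_sets.Basic\<close>)+
  have eY: "(\<lambda>\<omega>. \<lambda>i\<in>I. Y i \<omega>) -` ?cY \<inter> space M = {\<omega>\<in>space M. \<forall>j\<in>J. Y j \<omega> \<in> A j}"
    using J(2) by (auto simp: space_PiM)
  have eZ: "(\<lambda>\<omega>. \<lambda>i\<in>I'. Z i \<omega>) -` ?cZ \<inter> space M = {\<omega>\<in>space M. \<forall>j\<in>J'. Z j \<omega> \<in> B j}"
    using J'(2) by (auto simp: space_PiM)
  have "{\<omega>\<in>space M. (\<forall>j\<in>J. Y j \<omega> \<in> A j) \<and> (\<forall>j\<in>J'. Z j \<omega> \<in> B j)} =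
      {\<omega>\<in>space M. \<forall>j\<in>J. Y j \<omega> \<in> A j} \<inter> {\<omega>\<in>space M. \<forall>j\<in>J'. Z j \<omega> \<in> B j}" by auto
  then show ?thesis using fac unfolding eY eZ by simp
qed

lemma prob_eq_prod_by_peeling:
  assumes "finite J" "J \<subseteq> I"
    and peel: "\<And>J. finite J \<Longrightarrow> J \<noteq> {} \<Longrightarrow> J \<subseteq> I \<Longrightarrow> \<exists>N\<in>J.
      prob {\<omega>\<in>space M. (\<forall>j\<in>J. T j \<omega> = t j) \<and> P \<omega>} =
      prob {\<omega>\<in>space M. T N \<omega> = t N} * prob {\<omega>\<in>space M. (\<forall>j\<in>J - {N}. T j \<omega> = t j) \<and> P \<omega>}"
  shows "prob {\<omega>\<in>space M. (\<forall>j\<in>J. T j \<omega> = t j) \<and> P \<omega>} =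
    (\<Prod>j\<in>J. prob {\<omega>\<in>space M. T j \<omega> = t j}) * prob {\<omega>\<in>space M. P \<omega>}"
  using assms(1,2)
proof (induction J rule: finite_psubset_induct)
  case (psubset J)
  show ?case
  proof (cases "J = {}")
    case False
    then obtain N where N: "N \<in> J" and split:
      "prob {\<omega>\<in>space M. (\<forall>j\<in>J. T j \<omega> = t j) \<and> P \<omega>} =
       prob {\<omega>\<in>space M. T N \<omega> = t N} * prob {\<omega>\<in>space M. (\<forall>j\<in>J - {N}. T j \<omega> = t j) \<and> P \<omega>}"
      using peel psubset.prems psubset.hyps(1) by blast
    have "J - {N} \<subset> J" using N by auto
    then show ?thesis
      using split psubset.IH[of "J - {N}"] psubset.prems psubset.hyps(1) N
      by (simp add: prod.remove mult.assoc)
  qed simp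
qed

end

section \<open>Permutations\<close>

lemma bij_betw_extends_to_permutes:
  assumes B: "finite B" and CD: "C \<subseteq> B" "D \<subseteq> B" and h: "bij_betw h C D"
  obtains \<rho> where "\<rho> permutes B" "\<And>c. c \<in> C \<Longrightarrow> \<rho> c = h c"
proof -
  have "card (B - C) = card (B - D)"
    using B CD bij_betw_same_card[OF h] by (simp add: card_Diff_subset finite_subset)
  then obtain g where g: "bij_betw g (B - C) (B - D)"
    using B finite_same_card_bij by (metis finite_Diff)
  define \<rho> where "\<rho> x = (if x \<in> C then h x else if x \<in> B then g x else x)" for x
  have "bij_betw \<rho> C D" using h by (rule bij_betw_cong[THEN iffD1, rotated]) (simp add: \<rho>_def)
  moreover have "bij_betw \<rho> (B - C) (B - D)" using g by (rule bij_betw_cong[THEN iffD1, rotated]) (simp add: \<rho>_def)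
  ultimately have "bij_betw \<rho> (C \<union> (B - C)) (D \<union> (B - D))" by (rule bij_betw_combine) auto
  then have "bij_betw \<rho> B B" using CD by (simp add: Un_absorb1 Un_Diff_cancel)
  then have "\<rho> permutes B" by (rule bij_imp_permutes) (use CD in \<open>auto simp: \<rho>_def\<close>)
  then show ?thesis using that by (simp add: \<rho>_def)
qed

lemma permutes_matching_kernels:
  assumes B: "finite B" and f1: "f1 ` A \<subseteq> B" and f2: "f2 ` A \<subseteq> B"
    and kernel: "\<And>a a'. a \<in> A \<Longrightarrow> a' \<in> A \<Longrightarrow> f1 a = f1 a' \<longleftrightarrow> f2 a = f2 a'"
  obtains \<rho> where "\<rho> permutes B" "\<And>a. a \<in> A \<Longrightarrow> \<rho> (f1 a) = f2 a"
proof -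
  define h where "h b = f2 (SOME a. a \<in> A \<and> f1 a = b)" for b
  have hf: "h (f1 a) = f2 a" if "a \<in> A" for a
  proof -
    have "\<exists>x. x \<in> A \<and> f1 x = f1 a" using that by blast
    then have "(SOME x. x \<in> A \<and> f1 x = f1 a) \<in> A \<and> f1 (SOME x. x \<in> A \<and> f1 x = f1 a) = f1 a"
      by (rule someI_ex)
    then show ?thesis unfolding h_def using kernel that by blast
  qed
  have "bij_betw h (f1 ` A) (f2 ` A)"
  proof (rule bij_betw_imageI)
    show "inj_on h (f1 ` A)"
    proof (rule inj_onI)
      fix x y assume "x \<in> f1 ` A" "y \<in> f1 ` A" "h x = h y"
      then obtain a a' where "a \<in> A" "a' \<in> A" "x = f1 a" "y = f1 a'" "f2 a = f2 a'" by (auto simp: hf)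
      then show "x = y" using kernel by simp
    qed
    show "h ` f1 ` A = f2 ` A" unfolding image_image using hf by (rule image_cong[OF refl])
  qed
  then obtain \<rho> where "\<rho> permutes B" "\<And>b. b \<in> f1 ` A \<Longrightarrow> \<rho> b = h b"
    using bij_betw_extends_to_permutes[OF B f1 f2] by blast
  then show ?thesis using that hf by auto
qed

lemma permutes_matching_fibres:
  assumes A: "finite A" and f1: "f1 ` A \<subseteq> B" and f2: "f2 ` A \<subseteq> B"
    and fibres: "\<And>b. b \<in> B \<Longrightarrow> card {a\<in>A. f1 a = b} = card {a\<in>A. f2 a = b}"
  obtains \<rho> where "\<rho> permutes A" "\<And>a. a \<in> A \<Longrightarrow> f2 (\<rho> a) = f1 a"
proof -
  have "\<forall>b\<in>B. \<exists>g. bij_betw g {a\<in>A. f1 a = b} {a\<in>A. f2 a = b}"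
    using fibres A by (auto intro!: finite_same_card_bij)
  then obtain g where g: "\<And>b. b \<in> B \<Longrightarrow> bij_betw (g b) {a\<in>A. f1 a = b} {a\<in>A. f2 a = b}" by metis
  define \<rho> where "\<rho> a = (if a \<in> A then g (f1 a) a else a)" for a
  have into: "\<rho> a \<in> A \<and> f2 (\<rho> a) = f1 a" if "a \<in> A" for a
    using bij_betwE[OF g[of "f1 a"]] that f1 unfolding \<rho>_def by auto
  have "inj_on \<rho> A"
  proof (rule inj_onI)
    fix a a' assume a: "a \<in> A" "a' \<in> A" "\<rho> a = \<rho> a'"
    then have "f1 a = f1 a'" using into by metis
    moreover have "inj_on (g (f1 a)) {x\<in>A. f1 x = f1 a}" using g a f1 by (auto simp: bij_betw_def)
    ultimately show "a = a'" using a unfolding \<rho>_def by (auto dest: inj_onD)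
  qed
  moreover have "\<rho> ` A = A" using endo_inj_surj[OF A _ \<open>inj_on \<rho> A\<close>] into by auto
  ultimately have "\<rho> permutes A" by (intro bij_imp_permutes) (auto simp: bij_betw_def \<rho>_def)
  then show ?thesis using that into by blast
qed

lemma card_permutes_comp_right:
  assumes \<rho>: "\<rho> permutes A"
  shows "card {p. p permutes A \<and> P (p \<circ> \<rho>)} = card {p. p permutes A \<and> P p}"
proof (rule bij_betw_same_card[of "\<lambda>p. p \<circ> \<rho>"], rule bij_betw_byWitness[where f'="\<lambda>p. p \<circ> inv \<rho>"])
  have inv: "p \<circ> inv \<rho> \<circ> \<rho> = p" for p
    using permutes_inverses(2)[OF \<rho>] by (auto simp: fun_eq_iff)
  show "\<forall>p\<in>{p. p permutes A \<and> P (p \<circ> \<rho>)}. p \<circ> \<rho> \<circ> inv \<rho> = p"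
    using permutes_inverses(1)[OF \<rho>] by (auto simp: fun_eq_iff)
  show "\<forall>p\<in>{p. p permutes A \<and> P p}. p \<circ> inv \<rho> \<circ> \<rho> = p" using inv by blast
  show "(\<lambda>p. p \<circ> \<rho>) ` {p. p permutes A \<and> P (p \<circ> \<rho>)} \<subseteq> {p. p permutes A \<and> P p}"
    using permutes_compose[OF \<rho>] by blast
  show "(\<lambda>p. p \<circ> inv \<rho>) ` {p. p permutes A \<and> P p} \<subseteq> {p. p permutes A \<and> P (p \<circ> \<rho>)}"
  proof safe
    fix p assume "p permutes A" "P p"
    then show "p \<circ> inv \<rho> permutes A" "P (p \<circ> inv \<rho> \<circ> \<rho>)"
      using permutes_compose[OF permutes_inv[OF \<rho>]] inv[of p] by (simp_all only:)
  qed
qed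

lemma permutes_image_Collect:
  assumes "s permutes A"
  shows "s ` {x\<in>A. P x} = {y\<in>A. P (inv s y)}"
proof (intro set_eqI iffI)
  fix y assume "y \<in> s ` {x\<in>A. P x}"
  then show "y \<in> {y\<in>A. P (inv s y)}"
    using permutes_in_image[OF assms] permutes_inverses(2)[OF assms] by auto
next
  fix y assume "y \<in> {y\<in>A. P (inv s y)}"
  then show "y \<in> s ` {x\<in>A. P x}"
    using permutes_in_image[OF permutes_inv[OF assms]] permutes_inverses(1)[OF assms]
    by (auto intro!: image_eqI[of y s "inv s y"])
qed

lemma bij_betw_permutes_comp_left:
  assumes \<pi>: "\<pi> permutes A"
  shows "bij_betw ((\<circ>) \<pi>) {p. p permutes A} {p. p permutes A}"
proof (rule bij_betw_byWitness[where f'="(\<circ>) (inv \<pi>)"])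
  show "\<forall>p\<in>{p. p permutes A}. inv \<pi> \<circ> (\<pi> \<circ> p) = p"
    using permutes_inverses(2)[OF \<pi>] by (auto simp: fun_eq_iff)
  show "\<forall>p\<in>{p. p permutes A}. \<pi> \<circ> (inv \<pi> \<circ> p) = p"
    using permutes_inverses(1)[OF \<pi>] by (auto simp: fun_eq_iff)
  show "(\<circ>) \<pi> ` {p. p permutes A} \<subseteq> {p. p permutes A}"
    using permutes_compose[OF _ \<pi>] by auto
  show "(\<circ>) (inv \<pi>) ` {p. p permutes A} \<subseteq> {p. p permutes A}"
    using permutes_compose[OF _ permutes_inv[OF \<pi>]] by auto
qed

lemma card_permutes_factors:
  assumes relabel: "\<And>l1 l2. P l1 \<Longrightarrow> P l2 \<Longrightarrow> f l1 = f l2 \<Longrightarrow> \<exists>\<rho>. \<rho> permutes A \<and> act \<rho> l1 = l2"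
    and act: "\<And>q \<rho> l. act q (act \<rho> l) = act (q \<circ> \<rho>) l"
  obtains \<phi> where "\<And>l. P l \<Longrightarrow> card {q. q permutes A \<and> act q l = t} = \<phi> (f l)"
proof
  fix l assume l: "P l"
  define r where "r = (SOME r. P r \<and> f r = f l)"
  have "P r \<and> f r = f l" unfolding r_def by (rule someI[of _ l]) (simp add: l)
  then obtain \<rho> where \<rho>: "\<rho> permutes A" "act \<rho> r = l" using relabel l by blast
  have "card {q. q permutes A \<and> act q l = t} = card {q. q permutes A \<and> act (q \<circ> \<rho>) r = t}"
    using \<rho>(2) by (simp add: act[symmetric])
  also have "\<dots> = card {q. q permutes A \<and> act q r = t}" by (rule card_permutes_comp_right[OF \<rho>(1)])
  finally show "card {q. q permutes A \<and> act q l = t} =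
      card {q. q permutes A \<and> act q (SOME r. P r \<and> f r = f l) = t}" unfolding r_def .
qed

section \<open>Layers of a genealogy\<close>

lemma finite_Vg [simp]: "finite (Vg X n)"
  by (simp add: Vg_def)

definition is_layer :: "(nat \<Rightarrow> nat) \<Rightarrow> nat \<Rightarrow> edge set \<Rightarrow> bool" where
  "is_layer X n l \<longleftrightarrow> l \<subseteq> Vg X n \<times> Vg X (Suc n) \<and> (\<forall>w\<in>Vg X (Suc n). \<exists>!v. (v, w) \<in> l)"

definition parent :: "edge set \<Rightarrow> vert \<Rightarrow> vert" where
  "parent l w = (THE v. (v, w) \<in> l)"

lemma is_layer_mem_iff:
  assumes "is_layer X n l"
  shows "(v, w) \<in> l \<longleftrightarrow> w \<in> Vg X (Suc n) \<and> v = parent l w"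
proof (cases "w \<in> Vg X (Suc n)")
  case True
  then have "\<exists>!v. (v, w) \<in> l" using assms unfolding is_layer_def by blast
  then have "(v, w) \<in> l \<longleftrightarrow> v = parent l w"
    unfolding parent_def by (auto intro: the1_equality[symmetric] theI')
  with True show ?thesis by simp
qed (use assms in \<open>auto simp: is_layer_def\<close>)

lemma is_layer_parent:
  assumes "is_layer X n l" "w \<in> Vg X (Suc n)"
  shows "(parent l w, w) \<in> l" "parent l w \<in> Vg X n"
proof -
  show "(parent l w, w) \<in> l" using is_layer_mem_iff[OF assms(1)] assms(2) by blast
  then show "parent l w \<in> Vg X n" using assms(1) unfolding is_layer_def by blast
qed

lemma is_layer_eqI:
  assumes l1: "is_layer X n l1" and l2: "is_layer X n l2"
    and parents: "\<And>w. w \<in> Vg X (Suc n) \<Longrightarrow> parent l1 w = parent l2 w"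
  shows "l1 = l2"
proof (rule set_eqI)
  fix x :: edge
  obtain v w where "x = (v, w)" by (cases x)
  then show "x \<in> l1 \<longleftrightarrow> x \<in> l2"
    using is_layer_mem_iff[OF l1, of v w] is_layer_mem_iff[OF l2, of v w] parents[of w] by auto
qed

lemma mem_map_prod_image_iff:
  assumes "bij p" "bij q"
  shows "(v, w) \<in> map_prod p q ` l \<longleftrightarrow> (inv p v, inv q w) \<in> l"
proof
  assume "(v, w) \<in> map_prod p q ` l"
  then obtain a b where "(a, b) \<in> l" "v = p a" "w = q b" by auto
  then show "(inv p v, inv q w) \<in> l" using assms by (simp add: bij_is_inj)
next
  assume "(inv p v, inv q w) \<in> l"
  moreover have "(v, w) = map_prod p q (inv p v, inv q w)" using assms by (simp add: surj_f_inv_f bij_is_surj)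
  ultimately show "(v, w) \<in> map_prod p q ` l" by (rule rev_image_eqI)
qed

lemma is_layer_map_prod:
  assumes l: "is_layer X n l" and p: "p permutes Vg X n" and q: "q permutes Vg X (Suc n)"
  shows "is_layer X n (map_prod p q ` l)"
    and "w \<in> Vg X (Suc n) \<Longrightarrow> parent (map_prod p q ` l) w = p (parent l (inv q w))"
proof -
  have mem: "(v, w) \<in> map_prod p q ` l \<longleftrightarrow> w \<in> Vg X (Suc n) \<and> v = p (parent l (inv q w))" for v w
  proof -
    have "(v, w) \<in> map_prod p q ` l \<longleftrightarrow> inv q w \<in> Vg X (Suc n) \<and> inv p v = parent l (inv q w)"
      using mem_map_prod_image_iff[OF permutes_bij[OF p] permutes_bij[OF q]] is_layer_mem_iff[OF l] by simp
    also have "\<dots> \<longleftrightarrow> w \<in> Vg X (Suc n) \<and> v = p (parent l (inv q w))"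
      using permutes_in_image[OF permutes_inv[OF q]] permutes_inv_eq[OF p] by auto
    finally show ?thesis .
  qed
  have in_n: "p (parent l (inv q w)) \<in> Vg X n" if "w \<in> Vg X (Suc n)" for w
    using is_layer_parent(2)[OF l] that permutes_in_image[OF permutes_inv[OF q]] permutes_in_image[OF p] by simp
  have "map_prod p q ` l \<subseteq> Vg X n \<times> Vg X (Suc n)"
  proof (rule subrelI)
    fix v w assume "(v, w) \<in> map_prod p q ` l"
    then show "(v, w) \<in> Vg X n \<times> Vg X (Suc n)" using mem[of v w] in_n[of w] by simp
  qed
  moreover have "\<forall>w\<in>Vg X (Suc n). \<exists>!v. (v, w) \<in> map_prod p q ` l" by (simp add: mem)
  ultimately show layer: "is_layer X n (map_prod p q ` l)" unfolding is_layer_def ..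
  show "w \<in> Vg X (Suc n) \<Longrightarrow> parent (map_prod p q ` l) w = p (parent l (inv q w))"
    using is_layer_mem_iff[OF layer, of "p (parent l (inv q w))" w] mem[of "p (parent l (inv q w))" w] by simp
qed

lemma od_eq_card_children:
  assumes "is_layer X n l"
  shows "od l v = card {w \<in> Vg X (Suc n). parent l w = v}"
proof -
  have "{w. (v, w) \<in> l} = {w \<in> Vg X (Suc n). parent l w = v}" using is_layer_mem_iff[OF assms, of v] by auto
  then show ?thesis by (simp add: od_def)
qed

lemma Kvec_eq_imp_children_relabelling:
  assumes l1: "is_layer X n l1" and l2: "is_layer X n l2" and K: "Kvec X l1 n = Kvec X l2 n"
  shows "\<exists>\<rho>. \<rho> permutes Vg X (Suc n) \<and> map_prod id \<rho> ` l1 = l2"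
proof -
  have img: "parent l ` Vg X (Suc n) \<subseteq> Vg X n" if "is_layer X n l" for l
    using is_layer_parent(2)[OF that] by blast
  have fibres: "card {w \<in> Vg X (Suc n). parent l1 w = v} = card {w \<in> Vg X (Suc n). parent l2 w = v}"
    if v: "v \<in> Vg X n" for v
  proof -
    obtain i where "v = (n, i)" "i \<in> {1..X n}" using v by (auto simp: Vg_def)
    then show ?thesis
      using fun_cong[OF K, of i] by (simp add: Kvec_def od_eq_card_children[OF l1] od_eq_card_children[OF l2])
  qed
  obtain \<rho> where \<rho>: "\<rho> permutes Vg X (Suc n)" "\<And>w. w \<in> Vg X (Suc n) \<Longrightarrow> parent l2 (\<rho> w) = parent l1 w"
    using permutes_matching_fibres[OF finite_Vg img[OF l1] img[OF l2] fibres] by metis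
  have "map_prod id \<rho> ` l1 = l2"
  proof (rule is_layer_eqI[OF is_layer_map_prod(1)[OF l1 permutes_id \<rho>(1)] l2])
    fix w assume w: "w \<in> Vg X (Suc n)"
    have "parent (map_prod id \<rho> ` l1) w = parent l1 (inv \<rho> w)"
      using is_layer_map_prod(2)[OF l1 permutes_id \<rho>(1) w] by simp
    also have "\<dots> = parent l2 (\<rho> (inv \<rho> w))"
      using \<rho>(2) permutes_in_image[OF permutes_inv[OF \<rho>(1)]] w by simp
    also have "\<dots> = parent l2 w" using permutes_inverses(1)[OF \<rho>(1)] by simp
    finally show "parent (map_prod id \<rho> ` l1) w = parent l2 w" .
  qed
  with \<rho>(1) show ?thesis by (intro exI[of _ \<rho>] conjI)
qed

lemma Xi_is_layer:
  assumes "is_layer X n l"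
  shows "Xi X l n = (\<lambda>w. {w' \<in> Vg X (Suc n). parent l w' = parent l w}) ` Vg X (Suc n)"
proof -
  have children: "{w \<in> Vg X (Suc n). (v, w) \<in> l} = {w \<in> Vg X (Suc n). parent l w = v}" for v
    using is_layer_mem_iff[OF assms] by auto
  let ?fib = "\<lambda>v. {w \<in> Vg X (Suc n). parent l w = v}"
  show ?thesis unfolding Xi_def children
  proof (intro set_eqI iffI)
    fix C assume "C \<in> {?fib v | v. v \<in> Vg X n} - {{}}"
    then obtain v w where "C = ?fib v" "w \<in> C" by blast
    then show "C \<in> (\<lambda>w. ?fib (parent l w)) ` Vg X (Suc n)" by auto
  next
    fix C assume "C \<in> (\<lambda>w. ?fib (parent l w)) ` Vg X (Suc n)"
    then obtain w where "w \<in> Vg X (Suc n)" "C = ?fib (parent l w)" by blast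
    then show "C \<in> {?fib v | v. v \<in> Vg X n} - {{}}" using is_layer_parent(2)[OF assms] by blast
  qed
qed

lemma Xi_eq_imp_parent_relabelling:
  assumes l1: "is_layer X n l1" and l2: "is_layer X n l2" and Xi: "Xi X l1 n = Xi X l2 n"
  shows "\<exists>\<rho>. \<rho> permutes Vg X n \<and> map_prod \<rho> id ` l1 = l2"
proof -
  let ?cls = "\<lambda>l w. {w' \<in> Vg X (Suc n). parent l w' = parent l w}"
  have cls: "?cls l1 w = ?cls l2 w" if w: "w \<in> Vg X (Suc n)" for w
  proof -
    have "?cls l1 w \<in> Xi X l2 n" using w Xi Xi_is_layer[OF l1] by auto
    then obtain w' where "w' \<in> Vg X (Suc n)" "?cls l1 w = ?cls l2 w'" using Xi_is_layer[OF l2] by auto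
    moreover from this have "parent l2 w = parent l2 w'" using w by blast
    ultimately show ?thesis by simp
  qed
  have img: "parent l ` Vg X (Suc n) \<subseteq> Vg X n" if "is_layer X n l" for l
    using is_layer_parent(2)[OF that] by blast
  have kernel: "parent l1 w = parent l1 w' \<longleftrightarrow> parent l2 w = parent l2 w'"
    if "w \<in> Vg X (Suc n)" "w' \<in> Vg X (Suc n)" for w w'
  proof -
    have "w' \<in> ?cls l1 w \<longleftrightarrow> w' \<in> ?cls l2 w" using cls[OF that(1)] by simp
    with that(2) show ?thesis
      by (simp only: mem_Collect_eq eq_commute[of "parent l1 w"] eq_commute[of "parent l2 w"] simp_thms)
  qed
  obtain \<rho> where \<rho>: "\<rho> permutes Vg X n" "\<And>w. w \<in> Vg X (Suc n) \<Longrightarrow> \<rho> (parent l1 w) = parent l2 w"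
    using permutes_matching_kernels[OF finite_Vg img[OF l1] img[OF l2] kernel] by metis
  have "map_prod \<rho> id ` l1 = l2"
  proof (rule is_layer_eqI[OF is_layer_map_prod(1)[OF l1 \<rho>(1) permutes_id] l2])
    fix w assume "w \<in> Vg X (Suc n)"
    then show "parent (map_prod \<rho> id ` l1) w = parent l2 w"
      using is_layer_map_prod(2)[OF l1 \<rho>(1) permutes_id] \<rho>(2) by (simp add: inv_id)
  qed
  with \<rho>(1) show ?thesis by (intro exI[of _ \<rho>] conjI)
qed

definition index_perm :: "(nat \<Rightarrow> nat) \<Rightarrow> nat \<Rightarrow> (vert \<Rightarrow> vert) \<Rightarrow> nat \<Rightarrow> nat" where
  "index_perm X n p i = (if i \<in> {1..X n} then snd (inv p (n, i)) else i)"

lemma index_perm_inv: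
  assumes "p permutes Vg X n" "i \<in> {1..X n}"
  shows "inv p (n, i) = (n, index_perm X n p i)" "index_perm X n p i \<in> {1..X n}"
proof -
  have "inv p (n, i) \<in> Vg X n"
    using assms permutes_in_image[OF permutes_inv[OF assms(1)]] by (simp add: Vg_def)
  then show "inv p (n, i) = (n, index_perm X n p i)" "index_perm X n p i \<in> {1..X n}"
    using assms(2) unfolding index_perm_def by (auto simp: Vg_def)
qed

lemma index_perm_permutes:
  assumes p: "p permutes Vg X n"
  shows "index_perm X n p permutes {1..X n}"
proof (rule bij_imp_permutes)
  have inj: "inj_on (index_perm X n p) {1..X n}"
  proof (rule inj_onI)
    fix i j assume "i \<in> {1..X n}" "j \<in> {1..X n}" "index_perm X n p i = index_perm X n p j"
    then have "inv p (n, i) = inv p (n, j)" using index_perm_inv[OF p] by metis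
    then show "i = j" using permutes_inj[OF permutes_inv[OF p]] by (auto dest: injD)
  qed
  moreover have "index_perm X n p ` {1..X n} \<subseteq> {1..X n}" using index_perm_inv(2)[OF p] by auto
  then have "index_perm X n p ` {1..X n} = {1..X n}" using endo_inj_surj[OF finite_atLeastAtMost _ inj] by simp
  ultimately show "bij_betw (index_perm X n p) {1..X n} {1..X n}" by (simp add: bij_betw_def)
qed (auto simp: index_perm_def)

lemma Kvec_map_prod_parents:
  assumes p: "p permutes Vg X n"
  shows "Kvec X (map_prod p id ` l) n = Kvec X l n \<circ> index_perm X n p"
proof
  fix i
  show "Kvec X (map_prod p id ` l) n i = (Kvec X l n \<circ> index_perm X n p) i"
  proof (cases "i \<in> {1..X n}")
    case True
    have "{w. ((n, i), w) \<in> map_prod p id ` l} = {w. (inv p (n, i), w) \<in> l}"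
      by (rule Collect_cong) (simp add: mem_map_prod_image_iff[OF permutes_bij[OF p] bij_id] inv_id)
    then show ?thesis using True index_perm_inv[OF p True] by (simp add: Kvec_def od_def)
  qed (auto simp: Kvec_def index_perm_def)
qed

lemma Xi_map_prod_children:
  assumes l: "is_layer X n l" and s: "s permutes Vg X (Suc n)"
  shows "Xi X (map_prod id s ` l) n = (\<lambda>B. s ` B) ` Xi X l n"
proof -
  let ?V = "Vg X (Suc n)" and ?l' = "map_prod id s ` l"
  have cls: "{w' \<in> ?V. parent ?l' w' = parent ?l' (s w)} = s ` {w' \<in> ?V. parent l w' = parent l w}"
    if "w \<in> ?V" for w
  proof -
    have "{w' \<in> ?V. parent ?l' w' = parent ?l' (s w)} = {w' \<in> ?V. parent l (inv s w') = parent l w}"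
      using is_layer_map_prod(2)[OF l permutes_id s] that permutes_in_image[OF s] permutes_inverses(2)[OF s]
      by auto
    also have "\<dots> = s ` {w' \<in> ?V. parent l w' = parent l w}"
      by (rule permutes_image_Collect[OF s, symmetric])
    finally show ?thesis .
  qed
  have "Xi X ?l' n = (\<lambda>w. {w' \<in> ?V. parent ?l' w' = parent ?l' w}) ` (s ` ?V)"
    using Xi_is_layer[OF is_layer_map_prod(1)[OF l permutes_id s]] permutes_image[OF s] by simp
  also have "\<dots> = (\<lambda>B. s ` B) ` Xi X l n"
    unfolding Xi_is_layer[OF l] image_image using cls by (auto simp: image_iff)
  finally show ?thesis .
qed

lemma card_children_relabellings_factor:
  "\<exists>\<phi>. \<forall>l a. is_layer X n l \<longrightarrow> a permutes Vg X n \<longrightarrow>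
    card {q. q permutes Vg X (Suc n) \<and> map_prod a q ` l = t} = \<phi> (Kvec X l n \<circ> index_perm X n a)"
proof -
  obtain \<phi> where \<phi>: "\<And>l. is_layer X n l \<Longrightarrow>
      card {q. q permutes Vg X (Suc n) \<and> map_prod id q ` l = t} = \<phi> (Kvec X l n)"
    using card_permutes_factors[of "is_layer X n" "\<lambda>l. Kvec X l n" "Vg X (Suc n)" "\<lambda>q l. map_prod id q ` l" t]
      Kvec_eq_imp_children_relabelling by (auto simp: image_comp map_prod.comp)
  have "card {q. q permutes Vg X (Suc n) \<and> map_prod a q ` l = t} = \<phi> (Kvec X l n \<circ> index_perm X n a)"
    if l: "is_layer X n l" and a: "a permutes Vg X n" for l a
  proof -
    have "{q. q permutes Vg X (Suc n) \<and> map_prod a q ` l = t} =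
        {q. q permutes Vg X (Suc n) \<and> map_prod id q ` (map_prod a id ` l) = t}"
      by (simp add: image_comp map_prod.comp)
    then show ?thesis
      using \<phi>[OF is_layer_map_prod(1)[OF l a permutes_id]] Kvec_map_prod_parents[OF a] by simp
  qed
  then show ?thesis by blast
qed

lemma card_parent_relabellings_factor:
  "\<exists>\<phi>. \<forall>l b. is_layer X n l \<longrightarrow> b permutes Vg X (Suc n) \<longrightarrow>
    card {q. q permutes Vg X n \<and> map_prod q b ` l = t} = \<phi> ((\<lambda>B. b ` B) ` Xi X l n)"
proof -
  obtain \<phi> where \<phi>: "\<And>l. is_layer X n l \<Longrightarrow>
      card {q. q permutes Vg X n \<and> map_prod q id ` l = t} = \<phi> (Xi X l n)"
    using card_permutes_factors[of "is_layer X n" "\<lambda>l. Xi X l n" "Vg X n" "\<lambda>q l. map_prod q id ` l" t]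
      Xi_eq_imp_parent_relabelling by (auto simp: image_comp map_prod.comp)
  have "card {q. q permutes Vg X n \<and> map_prod q b ` l = t} = \<phi> ((\<lambda>B. b ` B) ` Xi X l n)"
    if l: "is_layer X n l" and b: "b permutes Vg X (Suc n)" for l b
  proof -
    have "{q. q permutes Vg X n \<and> map_prod q b ` l = t} =
        {q. q permutes Vg X n \<and> map_prod q id ` (map_prod id b ` l) = t}"
      by (simp add: image_comp map_prod.comp)
    then show ?thesis
      using \<phi>[OF is_layer_map_prod(1)[OF l permutes_id b]] Xi_map_prod_children[OF l b] by simp
  qed
  then show ?thesis by blast
qed

lemma Vg_unique: "v \<in> Vg X m \<Longrightarrow> v \<in> Vg X n \<Longrightarrow> m = n"
  by (auto simp: Vg_def)

lemma enat_less_mono: "m \<le> n \<Longrightarrow> enat n < \<tau> \<Longrightarrow> enat m < \<tau>"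
  by (meson enat_ord_simps(1) le_less_trans)

lemma genealogy_edge:
  assumes "genealogy \<tau> X k E" "(v, w) \<in> E"
  obtains m where "enat (Suc m) < \<tau>" "v \<in> Vg X m" "w \<in> Vg X (Suc m)"
  using assms unfolding genealogy_def by blast

lemma is_layer_layer:
  assumes E: "genealogy \<tau> X k E" and n: "enat (Suc n) < \<tau>"
  shows "is_layer X n (layer X E n)"
proof -
  have "\<exists>!v. (v, w) \<in> layer X E n" if "w \<in> Vg X (Suc n)" for w
  proof -
    have "\<exists>!v. v \<in> Vg X n \<and> (v, w) \<in> E" using E n that unfolding genealogy_def by blast
    moreover have "(v, w) \<in> layer X E n \<longleftrightarrow> v \<in> Vg X n \<and> (v, w) \<in> E" for v
      using that by (auto simp: layer_def)
    ultimately show ?thesis by simp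
  qed
  then show ?thesis unfolding is_layer_def layer_def by blast
qed

lemma Kvec_layer:
  assumes E: "genealogy \<tau> X k E"
  shows "Kvec X E n = Kvec X (layer X E n) n"
proof -
  have "{w. ((n, i), w) \<in> E} = {w. ((n, i), w) \<in> layer X E n}" if "i \<in> {1..X n}" for i
  proof (intro Collect_cong iffI)
    fix w assume vw: "((n, i), w) \<in> E"
    then obtain m where "(n, i) \<in> Vg X m" "w \<in> Vg X (Suc m)" by (rule genealogy_edge[OF E])
    moreover have "(n, i) \<in> Vg X n" using that by (simp add: Vg_def)
    ultimately have "m = n" using Vg_unique by blast
    with vw \<open>w \<in> Vg X (Suc m)\<close> \<open>(n, i) \<in> Vg X n\<close> show "((n, i), w) \<in> layer X E n"
      by (simp add: layer_def)
  qed (simp add: layer_def)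
  then show ?thesis unfolding Kvec_def od_def by (intro restrict_ext) simp
qed

lemma Xi_layer: "Xi X E n = Xi X (layer X E n) n"
  unfolding Xi_def layer_def by auto

lemma layer_perm_edges:
  assumes E: "genealogy \<tau> X k E" and n: "enat (Suc n) < \<tau>"
    and s: "\<And>m. enat m < \<tau> \<Longrightarrow> s ` Vg X m \<subseteq> Vg X m"
  shows "layer X (perm_edges s E) n =
    map_prod (\<lambda>x. if x \<in> Vg X n then s x else x) (\<lambda>x. if x \<in> Vg X (Suc n) then s x else x) ` layer X E n"
    (is "_ = map_prod ?s ?s' ` _")
proof (intro set_eqI iffI)
  fix x assume "x \<in> layer X (perm_edges s E) n"
  then obtain v w where x: "x = (s v, s w)" "(v, w) \<in> E" "s v \<in> Vg X n" "s w \<in> Vg X (Suc n)"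
    by (auto simp: layer_def perm_edges_def)
  obtain m where m: "enat (Suc m) < \<tau>" "v \<in> Vg X m" "w \<in> Vg X (Suc m)" by (rule genealogy_edge[OF E x(2)])
  have "s v \<in> Vg X m" using s[OF enat_less_mono[OF _ m(1)], of m] m(2) by auto
  then have "m = n" using x(3) Vg_unique by blast
  with m x show "x \<in> map_prod ?s ?s' ` layer X E n"
    by (intro image_eqI[of _ _ "(v, w)"]) (auto simp: layer_def)
next
  fix x assume "x \<in> map_prod ?s ?s' ` layer X E n"
  then obtain v w where x: "x = (s v, s w)" "(v, w) \<in> E" "v \<in> Vg X n" "w \<in> Vg X (Suc n)"
    by (auto simp: layer_def)
  have "s v \<in> Vg X n" "s w \<in> Vg X (Suc n)"
    using s[OF enat_less_mono[OF _ n], of n] s[OF n] x(3,4) by auto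
  with x show "x \<in> layer X (perm_edges s E) n" by (auto simp: layer_def perm_edges_def)
qed

section \<open>Uniformly relabelled genealogies\<close>

locale relabelled_genealogy =
  fixes M :: "'w measure" and \<tau> :: enat and X :: "nat \<Rightarrow> nat" and k :: "nat \<Rightarrow> nat \<Rightarrow> nat"
    and E :: "'w \<Rightarrow> edge set" and \<sigma> :: "'w \<Rightarrow> vert \<Rightarrow> vert"
  assumes prob_space_M: "prob_space M"
    and model: "genealogy_model M \<tau> X k E"
    and uniform: "uniform_P M \<tau> X \<sigma>"
    and indep_sigma_layers: "indep_rv M
      (PiM {n. enat n < \<tau>} (\<lambda>_. cs)) (\<lambda>\<omega>. \<lambda>n\<in>{n. enat n < \<tau>}. sig X \<sigma> n \<omega>)
      (PiM {n. enat (Suc n) < \<tau>} (\<lambda>_. cs)) (\<lambda>\<omega>. \<lambda>n\<in>{n. enat (Suc n) < \<tau>}. layer X (E \<omega>) n)"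
begin

sublocale prob_space M by (rule prob_space_M)

abbreviation S :: "nat \<Rightarrow> 'w \<Rightarrow> vert \<Rightarrow> vert" where "S n \<omega> \<equiv> sig X \<sigma> n \<omega>"
abbreviation L :: "nat \<Rightarrow> 'w \<Rightarrow> edge set" where "L n \<omega> \<equiv> layer X (E \<omega>) n"
abbreviation T :: "nat \<Rightarrow> 'w \<Rightarrow> edge set" where "T n \<omega> \<equiv> sig_layer X \<sigma> E n \<omega>"
abbreviation perms :: "nat \<Rightarrow> (vert \<Rightarrow> vert) set" where "perms n \<equiv> {p. p permutes Vg X n}"

lemma genealogy_E: "\<omega> \<in> space M \<Longrightarrow> genealogy \<tau> X k (E \<omega>)"
  using model unfolding genealogy_model_def by blast

lemma S_permutes:
  assumes \<omega>: "\<omega> \<in> space M" and n: "enat n < \<tau>"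
  shows "S n \<omega> permutes Vg X n"
proof (rule bij_imp_permutes)
  have "\<sigma> \<omega> permutes Vall \<tau> X" "\<sigma> \<omega> ` Vg X n = Vg X n" using uniform \<omega> n unfolding uniform_P_def by blast+
  moreover have "S n \<omega> ` Vg X n = \<sigma> \<omega> ` Vg X n" by (simp add: sig_def)
  moreover have "inj_on (S n \<omega>) (Vg X n) \<longleftrightarrow> inj_on (\<sigma> \<omega>) (Vg X n)" by (rule inj_on_cong) (simp add: sig_def)
  ultimately show "bij_betw (S n \<omega>) (Vg X n) (Vg X n)"
    by (auto simp: bij_betw_def dest: permutes_inj intro: inj_on_subset)
qed (simp add: sig_def)

lemma simple_S: "enat n < \<tau> \<Longrightarrow> simple_function M (S n)"
  using uniform S_permutes finite_permutations[OF finite_Vg]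
  by (intro simple_function_of_finite_range[of _ "perms n"]) (auto simp: uniform_P_def indep_vars_def2)

lemma simple_L: "enat (Suc n) < \<tau> \<Longrightarrow> simple_function M (L n)"
  using model
  by (intro simple_function_of_finite_range[of _ "Pow (Vg X n \<times> Vg X (Suc n))"])
    (auto simp: genealogy_model_def layer_def)

lemma simple_T:
  assumes n: "enat (Suc n) < \<tau>"
  shows "simple_function M (T n)"
proof -
  have "simple_function M (\<lambda>\<omega>. (S n \<omega>, S (Suc n) \<omega>, L n \<omega>))"
    using n enat_less_mono[OF _ n, of n] by (intro simple_function_Pair simple_S simple_L) auto
  then have "simple_function M (\<lambda>\<omega>. (\<lambda>(a, b, l). map_prod a b ` l) (S n \<omega>, S (Suc n) \<omega>, L n \<omega>))"
    by (rule simple_function_compose1)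
  then show ?thesis by (simp add: sig_layer_def)
qed

lemma prob_S:
  assumes n: "enat n < \<tau>"
  shows "prob {\<omega>\<in>space M. S n \<omega> = q} = (if q permutes Vg X n then 1 / real (card (perms n)) else 0)"
proof -
  have "distr M cs (S n) = measure_pmf (pmf_of_set (perms n))" using uniform n unfolding uniform_P_def by blast
  moreover have "prob {\<omega>\<in>space M. S n \<omega> = q} = measure (distr M cs (S n)) {q}"
    using measurable_simple_function[OF simple_S[OF n]] by (simp add: measure_distr vimage_def Int_def conj_commute)
  moreover have "perms n \<noteq> {}" using permutes_id by blast
  ultimately show ?thesis using finite_permutations[OF finite_Vg] by (simp add: measure_pmf_single indicator_def)
qed

lemma prob_sigmas:
  assumes G: "finite G" "G \<subseteq> {m. enat m < \<tau>}"
  shows "prob {\<omega>\<in>space M. \<forall>m\<in>G. S m \<omega> = s m} = (\<Prod>m\<in>G. prob {\<omega>\<in>space M. S m \<omega> = s m})"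
proof (cases "G = {}")
  case False
  have indep: "indep_vars (\<lambda>_. cs) (sig X \<sigma>) {n. enat n < \<tau>}" using uniform unfolding uniform_P_def by blast
  have "prob (\<Inter>m\<in>G. S m -` {s m} \<inter> space M) = (\<Prod>m\<in>G. prob (S m -` {s m} \<inter> space M))"
    using indep False G by (intro indep_varsD) auto
  moreover have "(\<Inter>m\<in>G. S m -` {s m} \<inter> space M) = {\<omega>\<in>space M. \<forall>m\<in>G. S m \<omega> = s m}" using False by auto
  ultimately show ?thesis by (simp add: vimage_def Int_def conj_commute)
qed (simp add: prob_space)

lemma prob_layers_sigmas:
  assumes F: "finite F" "F \<subseteq> {m. enat (Suc m) < \<tau>}" and G: "finite G" "G \<subseteq> {m. enat m < \<tau>}"
  shows "prob {\<omega>\<in>space M. (\<forall>m\<in>F. L m \<omega> \<in> A m) \<and> (\<forall>m\<in>G. S m \<omega> = s m)} =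
    prob {\<omega>\<in>space M. \<forall>m\<in>F. L m \<omega> \<in> A m} * (\<Prod>m\<in>G. prob {\<omega>\<in>space M. S m \<omega> = s m})"
proof -
  have "prob {\<omega>\<in>space M. (\<forall>m\<in>G. S m \<omega> \<in> {s m}) \<and> (\<forall>m\<in>F. L m \<omega> \<in> A m)} =
      prob {\<omega>\<in>space M. \<forall>m\<in>G. S m \<omega> \<in> {s m}} * prob {\<omega>\<in>space M. \<forall>m\<in>F. L m \<omega> \<in> A m}"
    by (rule indep_rv_prob_cylinders[OF indep_sigma_layers G F])
  then show ?thesis using prob_sigmas[OF G, of s] by (simp add: conj_commute mult.commute)
qed

lemma layer_perm_edges_eq_T:
  assumes "\<omega> \<in> space M" "enat (Suc n) < \<tau>"
  shows "layer X (perm_edges (\<sigma> \<omega>) (E \<omega>)) n = T n \<omega>"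
  using uniform assms unfolding uniform_P_def sig_layer_def sig_def
  by (intro layer_perm_edges[OF genealogy_E]) auto

lemma prob_T_eq_sum:
  assumes n: "enat (Suc n) < \<tau>"
  shows "prob {\<omega>\<in>space M. T n \<omega> \<in> B} =
    (\<Sum>(a, b)\<in>perms n \<times> perms (Suc n). prob {\<omega>\<in>space M. map_prod a b ` L n \<omega> \<in> B}) /
      (real (card (perms n)) * real (card (perms (Suc n))))"
proof -
  have n0: "enat n < \<tau>" using enat_less_mono[OF _ n] by simp
  let ?P = "perms n \<times> perms (Suc n)" and ?c = "real (card (perms n)) * real (card (perms (Suc n)))"
  have SS: "simple_function M (\<lambda>\<omega>. (S n \<omega>, S (Suc n) \<omega>))" using simple_S n n0 by auto
  have "prob {\<omega>\<in>space M. T n \<omega> \<in> B} =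
      (\<Sum>ab\<in>?P. prob {\<omega>\<in>{\<omega>\<in>space M. T n \<omega> \<in> B}. (S n \<omega>, S (Suc n) \<omega>) = ab})"
  proof -
    have "{\<omega>\<in>space M. T n \<omega> \<in> B} \<in> events" by (rule events_Collect_simple_function[OF simple_T[OF n]])
    moreover have "(\<lambda>\<omega>. (S n \<omega>, S (Suc n) \<omega>)) ` space M \<subseteq> ?P" using S_permutes n n0 by auto
    ultimately show ?thesis
      using prob_Collect_eq_sum_points[OF SS, where R="?P" and A=UNIV] finite_permutations[OF finite_Vg] by simp
  qed
  also have "\<dots> = (\<Sum>(a, b)\<in>?P. prob {\<omega>\<in>space M. map_prod a b ` L n \<omega> \<in> B} / ?c)"
  proof (intro sum.cong refl, clarify)
    fix a b assume ab: "a permutes Vg X n" "b permutes Vg X (Suc n)"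
    have "{\<omega>\<in>{\<omega>\<in>space M. T n \<omega> \<in> B}. (S n \<omega>, S (Suc n) \<omega>) = (a, b)} =
        {\<omega>\<in>space M. (\<forall>m\<in>{n}. L m \<omega> \<in> {l. map_prod a b ` l \<in> B}) \<and> (\<forall>m\<in>{n, Suc n}. S m \<omega> = (if m = n then a else b) )}"
      by (auto simp: sig_layer_def)
    then show "prob {\<omega>\<in>{\<omega>\<in>space M. T n \<omega> \<in> B}. (S n \<omega>, S (Suc n) \<omega>) = (a, b)} =
        prob {\<omega>\<in>space M. map_prod a b ` L n \<omega> \<in> B} / ?c"
      using prob_layers_sigmas[of "{n}" "{n, Suc n}" "\<lambda>_. {l. map_prod a b ` l \<in> B}" "\<lambda>m. if m = n then a else b"]
        n n0 ab by (simp add: prob_S)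
  qed
  finally show ?thesis by (simp add: sum_divide_distrib split_def)
qed

lemma T_exchangeable:
  assumes n: "enat (Suc n) < \<tau>" and \<pi>: "\<pi> permutes Vg X n" and \<pi>': "\<pi>' permutes Vg X (Suc n)"
  shows "prob {\<omega>\<in>space M. map_prod \<pi> \<pi>' ` T n \<omega> = t} = prob {\<omega>\<in>space M. T n \<omega> = t}"
proof -
  let ?P = "perms n \<times> perms (Suc n)" and ?g = "\<lambda>(a, b). prob {\<omega>\<in>space M. map_prod a b ` L n \<omega> \<in> {t}}"
  have bij: "bij_betw (map_prod ((\<circ>) \<pi>) ((\<circ>) \<pi>')) ?P ?P"
    by (intro bij_betw_map_prod bij_betw_permutes_comp_left \<pi> \<pi>')
  have "prob {\<omega>\<in>space M. map_prod \<pi> \<pi>' ` T n \<omega> = t} = prob {\<omega>\<in>space M. T n \<omega> \<in> {l. map_prod \<pi> \<pi>' ` l = t}}"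
    by simp
  also have "\<dots> = (\<Sum>ab\<in>?P. ?g (map_prod ((\<circ>) \<pi>) ((\<circ>) \<pi>') ab)) /
      (real (card (perms n)) * real (card (perms (Suc n))))"
    unfolding prob_T_eq_sum[OF n] by (simp add: image_comp map_prod.comp split_def)
  also have "\<dots> = prob {\<omega>\<in>space M. T n \<omega> \<in> {t}}"
    unfolding prob_T_eq_sum[OF n] sum.reindex_bij_betw[OF bij] ..
  finally show ?thesis by simp
qed

lemma exchangeable_perm_edges:
  assumes n: "enat (Suc n) < \<tau>"
  shows "exchangeable_layer M X (\<lambda>\<omega>. perm_edges (\<sigma> \<omega>) (E \<omega>)) n"
  unfolding exchangeable_layer_def
proof (intro allI impI)
  fix \<pi> \<pi>' assume \<pi>: "\<pi> permutes Vg X n" and \<pi>': "\<pi>' permutes Vg X (Suc n)"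
  have "distr M cs (\<lambda>\<omega>. layer X (perm_edges (\<sigma> \<omega>) (E \<omega>)) n) = distr M cs (T n)"
    using layer_perm_edges_eq_T[OF _ n] by (intro distr_cong) auto
  also have "\<dots> = distr M cs (\<lambda>\<omega>. map_prod \<pi> \<pi>' ` T n \<omega>)"
    using T_exchangeable[OF n \<pi> \<pi>']
    by (intro distr_eq_of_prob_points simple_T[OF n] simple_function_compose1[OF simple_T[OF n]]) simp
  also have "\<dots> = distr M cs (\<lambda>\<omega>. map_prod \<pi> \<pi>' ` layer X (perm_edges (\<sigma> \<omega>) (E \<omega>)) n)"
    using layer_perm_edges_eq_T[OF _ n] by (intro distr_cong) auto
  finally show "distr M cs (\<lambda>\<omega>. layer X (perm_edges (\<sigma> \<omega>) (E \<omega>)) n) =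
      distr M cs (\<lambda>\<omega>. map_prod \<pi> \<pi>' ` layer X (perm_edges (\<sigma> \<omega>) (E \<omega>)) n)" .
qed

lemma simple_layers_sigmas:
  assumes "finite F" "F \<subseteq> {m. enat (Suc m) < \<tau>}" "finite G" "G \<subseteq> {m. enat m < \<tau>}"
  shows "simple_function M (\<lambda>\<omega>. (\<lambda>m\<in>F. L m \<omega>, \<lambda>m\<in>G. S m \<omega>))"
  using assms by (intro simple_function_Pair simple_function_restrict simple_L simple_S) auto

lemma prob_T_cylinder_fixing_sigma:
  assumes N: "enat (Suc N) < \<tau>"
    and F: "finite F" "F \<subseteq> {m. enat (Suc m) < \<tau>}" "N \<notin> F"
    and G: "finite G" "G \<subseteq> {m. enat m < \<tau>}" and f: "enat f < \<tau>" "f \<notin> G"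
    and act: "\<And>\<omega>. \<omega> \<in> space M \<Longrightarrow> (\<forall>m\<in>G. S m \<omega> = s m) \<Longrightarrow> T N \<omega> = act (S f \<omega>) (L N \<omega>)"
    and q: "q permutes Vg X f"
  shows "prob {\<omega>\<in>space M. T N \<omega> = t \<and> (\<forall>m\<in>F. L m \<omega> = l m) \<and> (\<forall>m\<in>G. S m \<omega> = s m) \<and> S f \<omega> = q} =
    (\<Prod>m\<in>G. prob {\<omega>\<in>space M. S m \<omega> = s m}) / real (card (perms f)) *
    prob ({\<omega>\<in>space M. \<forall>m\<in>F. L m \<omega> = l m} \<inter> {\<omega>\<in>space M. act q (L N \<omega>) = t})"
proof -
  let ?A = "\<lambda>m. if m = N then {x. act q x = t} else {l m}"
  have layers: "(\<forall>m\<in>insert N F. L m \<omega> \<in> ?A m) \<longleftrightarrow> act q (L N \<omega>) = t \<and> (\<forall>m\<in>F. L m \<omega> = l m)" for \<omega>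
    using F(3) by auto
  have sigmas: "(\<forall>m\<in>insert f G. S m \<omega> = (s(f := q)) m) \<longleftrightarrow> S f \<omega> = q \<and> (\<forall>m\<in>G. S m \<omega> = s m)" for \<omega>
    using f(2) by auto
  have "{\<omega>\<in>space M. T N \<omega> = t \<and> (\<forall>m\<in>F. L m \<omega> = l m) \<and> (\<forall>m\<in>G. S m \<omega> = s m) \<and> S f \<omega> = q} =
      {\<omega>\<in>space M. (\<forall>m\<in>insert N F. L m \<omega> \<in> ?A m) \<and> (\<forall>m\<in>insert f G. S m \<omega> = (s(f := q)) m)}"
    unfolding layers sigmas by (rule Collect_cong) (use act in force)
  then have "prob {\<omega>\<in>space M. T N \<omega> = t \<and> (\<forall>m\<in>F. L m \<omega> = l m) \<and> (\<forall>m\<in>G. S m \<omega> = s m) \<and> S f \<omega> = q} =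
      prob {\<omega>\<in>space M. \<forall>m\<in>insert N F. L m \<omega> \<in> ?A m} *
      (\<Prod>m\<in>insert f G. prob {\<omega>\<in>space M. S m \<omega> = (s(f := q)) m})"
    using F G N f by (simp only:) (intro prob_layers_sigmas, auto)
  moreover have "{\<omega>\<in>space M. \<forall>m\<in>insert N F. L m \<omega> \<in> ?A m} =
      {\<omega>\<in>space M. \<forall>m\<in>F. L m \<omega> = l m} \<inter> {\<omega>\<in>space M. act q (L N \<omega>) = t}"
    using layers by auto
  moreover have "(\<Prod>m\<in>G. prob {\<omega>\<in>space M. S m \<omega> = (s(f := q)) m}) = (\<Prod>m\<in>G. prob {\<omega>\<in>space M. S m \<omega> = s m})"
    using f(2) by (intro prod.cong) auto
  ultimately show ?thesis using G(1) f q by (simp add: prob_S)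
qed

text \<open>Summing out the uniform relabelling of the free generation \<open>f\<close> leaves the expected number of
  its values that produce \<open>t\<close>.\<close>

lemma prob_T_cylinder_eq_integral:
  assumes N: "enat (Suc N) < \<tau>"
    and F: "finite F" "F \<subseteq> {m. enat (Suc m) < \<tau>}" "N \<notin> F"
    and G: "finite G" "G \<subseteq> {m. enat m < \<tau>}" and f: "enat f < \<tau>" "f \<notin> G"
    and act: "\<And>\<omega>. \<omega> \<in> space M \<Longrightarrow> (\<forall>m\<in>G. S m \<omega> = s m) \<Longrightarrow> T N \<omega> = act (S f \<omega>) (L N \<omega>)"
  shows "prob {\<omega>\<in>space M. T N \<omega> = t \<and> (\<forall>m\<in>F. L m \<omega> = l m) \<and> (\<forall>m\<in>G. S m \<omega> = s m)} =
    (\<Prod>m\<in>G. prob {\<omega>\<in>space M. S m \<omega> = s m}) / real (card (perms f)) *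
    (\<integral>\<omega>. indicator {\<omega>\<in>space M. \<forall>m\<in>F. L m \<omega> = l m} \<omega> * real (card {q \<in> perms f. act q (L N \<omega>) = t}) \<partial>M)"
proof -
  let ?LF = "{\<omega>\<in>space M. \<forall>m\<in>F. L m \<omega> = l m}"
  let ?B = "{\<omega>\<in>space M. T N \<omega> = t \<and> (\<forall>m\<in>F. L m \<omega> = l m) \<and> (\<forall>m\<in>G. S m \<omega> = s m)}"
  have LF: "?LF \<in> events"
    using events_Collect_simple_function[OF simple_layers_sigmas[OF F(1,2) G], of "\<lambda>(x, y). \<forall>m\<in>F. x m = l m"]
    by simp
  have B: "?B \<in> events"
    using events_Collect_simple_function[OF simple_function_Pair[OF simple_T[OF N] simple_layers_sigmas[OF F(1,2) G]],
      of "\<lambda>(x, y, z). x = t \<and> (\<forall>m\<in>F. y m = l m) \<and> (\<forall>m\<in>G. z m = s m)"]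
    by simp
  have "prob ?B = (\<Sum>q\<in>perms f. prob {\<omega>\<in>?B. S f \<omega> = q})"
    using prob_Collect_eq_sum_points[OF simple_S[OF f(1)] _ _ B, where R="perms f" and A=UNIV]
      S_permutes[OF _ f(1)] finite_permutations[OF finite_Vg] by auto
  also have "\<dots> = (\<Sum>q\<in>perms f. (\<Prod>m\<in>G. prob {\<omega>\<in>space M. S m \<omega> = s m}) / real (card (perms f)) *
      prob (?LF \<inter> {\<omega>\<in>space M. act q (L N \<omega>) = t}))"
  proof (intro sum.cong refl)
    fix q assume "q \<in> perms f"
    moreover have "{\<omega>\<in>?B. S f \<omega> = q} =
        {\<omega>\<in>space M. T N \<omega> = t \<and> (\<forall>m\<in>F. L m \<omega> = l m) \<and> (\<forall>m\<in>G. S m \<omega> = s m) \<and> S f \<omega> = q}"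
      by auto
    ultimately show "prob {\<omega>\<in>?B. S f \<omega> = q} = (\<Prod>m\<in>G. prob {\<omega>\<in>space M. S m \<omega> = s m}) / real (card (perms f)) *
        prob (?LF \<inter> {\<omega>\<in>space M. act q (L N \<omega>) = t})"
      using prob_T_cylinder_fixing_sigma[OF N F G f act] by simp
  qed
  also have "\<dots> = (\<Prod>m\<in>G. prob {\<omega>\<in>space M. S m \<omega> = s m}) / real (card (perms f)) *
      (\<integral>\<omega>. indicator ?LF \<omega> * real (card {q \<in> perms f. act q (L N \<omega>) = t}) \<partial>M)"
    unfolding sum_distrib_left[symmetric]
    by (subst sum_prob_eq_integral_card[OF finite_permutations[OF finite_Vg] LF])
      (auto intro: events_Collect_simple_function[OF simple_L[OF N]])
  finally show ?thesis by simp
qed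

lemma prob_T_indep_layers_sigmas:
  assumes N: "enat (Suc N) < \<tau>"
    and F: "finite F" "F \<subseteq> {m. enat (Suc m) < \<tau>}" and G: "finite G" "G \<subseteq> {m. enat m < \<tau>}"
    and points: "\<And>l s. prob {\<omega>\<in>space M. T N \<omega> = t \<and> (\<forall>m\<in>F. L m \<omega> = l m) \<and> (\<forall>m\<in>G. S m \<omega> = s m)} =
      c * prob {\<omega>\<in>space M. (\<forall>m\<in>F. L m \<omega> = l m) \<and> (\<forall>m\<in>G. S m \<omega> = s m)}"
  shows "prob {\<omega>\<in>space M. T N \<omega> = t \<and> (\<lambda>m\<in>F. L m \<omega>, \<lambda>m\<in>G. S m \<omega>) \<in> A} =
    prob {\<omega>\<in>space M. T N \<omega> = t} * prob {\<omega>\<in>space M. (\<lambda>m\<in>F. L m \<omega>, \<lambda>m\<in>G. S m \<omega>) \<in> A}"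
proof (rule prob_conj_eq_mult_of_points[OF simple_layers_sigmas[OF F G]])
  show "{\<omega>\<in>space M. T N \<omega> = t} \<in> events" by (rule events_Collect_simple_function[OF simple_T[OF N]])
  fix w :: "(nat \<Rightarrow> edge set) \<times> (nat \<Rightarrow> vert \<Rightarrow> vert)"
  obtain l s where w: "w = (l, s)" by (cases w)
  show "prob {\<omega>\<in>space M. T N \<omega> = t \<and> (\<lambda>m\<in>F. L m \<omega>, \<lambda>m\<in>G. S m \<omega>) = w} =
      c * prob {\<omega>\<in>space M. (\<lambda>m\<in>F. L m \<omega>, \<lambda>m\<in>G. S m \<omega>) = w}"
  proof (cases "l \<in> extensional F \<and> s \<in> extensional G")
    case True
    then show ?thesis using points[of l s] unfolding w by (simp add: restrict_eq_iff)
  qed (auto simp: w restrict_eq_iff)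
qed

lemma prob_T_peel:
  assumes indep: "\<And>A. prob {\<omega>\<in>space M. T N \<omega> = t N \<and> (\<lambda>m\<in>F. L m \<omega>, \<lambda>m\<in>G. S m \<omega>) \<in> A} =
      prob {\<omega>\<in>space M. T N \<omega> = t N} * prob {\<omega>\<in>space M. (\<lambda>m\<in>F. L m \<omega>, \<lambda>m\<in>G. S m \<omega>) \<in> A}"
    and J: "J \<subseteq> F" "J \<subseteq> G" "Suc ` J \<subseteq> G" and J': "J' \<subseteq> G"
  shows "prob {\<omega>\<in>space M. T N \<omega> = t N \<and> (\<forall>j\<in>J. T j \<omega> = t j) \<and> (\<forall>j\<in>J'. S j \<omega> = s j)} =
    prob {\<omega>\<in>space M. T N \<omega> = t N} * prob {\<omega>\<in>space M. (\<forall>j\<in>J. T j \<omega> = t j) \<and> (\<forall>j\<in>J'. S j \<omega> = s j)}"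
proof -
  define A where "A = {(l, s'). (\<forall>j\<in>J. map_prod (s' j) (s' (Suc j)) ` l j = t j) \<and> (\<forall>j\<in>J'. s' j = s j)}"
  have "(\<lambda>m\<in>F. L m \<omega>, \<lambda>m\<in>G. S m \<omega>) \<in> A \<longleftrightarrow> (\<forall>j\<in>J. T j \<omega> = t j) \<and> (\<forall>j\<in>J'. S j \<omega> = s j)" for \<omega>
    using J J' unfolding A_def sig_layer_def by (auto simp: subset_iff)
  then show ?thesis using indep[of A] by simp
qed

lemma completely_neutral_perm_edges:
  assumes T_indep: "\<And>J t. finite J \<Longrightarrow> J \<subseteq> {m. enat (Suc m) < \<tau>} \<Longrightarrow>
    prob {\<omega>\<in>space M. \<forall>j\<in>J. T j \<omega> = t j} = (\<Prod>j\<in>J. prob {\<omega>\<in>space M. T j \<omega> = t j})"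
  shows "completely_neutral M \<tau> X (\<lambda>\<omega>. perm_edges (\<sigma> \<omega>) (E \<omega>))"
  unfolding completely_neutral_def
proof (intro conjI allI impI exchangeable_perm_edges)
  let ?T' = "\<lambda>n \<omega>. layer X (perm_edges (\<sigma> \<omega>) (E \<omega>)) n"
  have eq: "?T' j \<omega> = T j \<omega>" if "\<omega> \<in> space M" "enat (Suc j) < \<tau>" for j \<omega>
    using layer_perm_edges_eq_T[OF that] .
  show "indep_vars (\<lambda>_. cs) ?T' {n. enat (Suc n) < \<tau>}"
  proof (rule indep_vars_of_prob_points)
    fix i assume "i \<in> {n. enat (Suc n) < \<tau>}"
    then show "simple_function M (?T' i)" using simple_T eq by (subst simple_function_cong) auto
  next
    fix J t assume J: "J \<subseteq> {n. enat (Suc n) < \<tau>}" "finite J"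
    have "{\<omega>\<in>space M. \<forall>j\<in>J. ?T' j \<omega> = t j} = {\<omega>\<in>space M. \<forall>j\<in>J. T j \<omega> = t j}"
      "\<And>j. j \<in> J \<Longrightarrow> {\<omega>\<in>space M. ?T' j \<omega> = t j} = {\<omega>\<in>space M. T j \<omega> = t j}"
      using J(1) by (auto intro!: Collect_cong ball_cong simp: eq subset_iff)
    then show "prob {\<omega>\<in>space M. \<forall>j\<in>J. ?T' j \<omega> = t j} = (\<Prod>j\<in>J. prob {\<omega>\<in>space M. ?T' j \<omega> = t j})"
      using T_indep[OF J(2,1)] by simp
  qed
qed

lemma indep_rv_T_S:
  assumes I: "I \<subseteq> {m. enat (Suc m) < \<tau>}" and I': "I' \<subseteq> {m. enat m < \<tau>}"
    and fac: "\<And>J J' t s. finite J \<Longrightarrow> J \<subseteq> I \<Longrightarrow> finite J' \<Longrightarrow> J' \<subseteq> I' \<Longrightarrow>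
      prob {\<omega>\<in>space M. (\<forall>j\<in>J. T j \<omega> = t j) \<and> (\<forall>j\<in>J'. S j \<omega> = s j)} =
      (\<Prod>j\<in>J. prob {\<omega>\<in>space M. T j \<omega> = t j}) * prob {\<omega>\<in>space M. \<forall>j\<in>J'. S j \<omega> = s j}"
  shows "indep_rv M (PiM I (\<lambda>_. cs)) (\<lambda>\<omega>. \<lambda>m\<in>I. T m \<omega>) (PiM I' (\<lambda>_. cs)) (\<lambda>\<omega>. \<lambda>m\<in>I'. S m \<omega>)"
proof (rule indep_rv_of_prob_cylinders)
  fix J J' t s assume J: "J \<subseteq> I" "finite J" and J': "J' \<subseteq> I'" "finite J'"
  show "prob {\<omega>\<in>space M. (\<forall>j\<in>J. T j \<omega> = t j) \<and> (\<forall>j\<in>J'. S j \<omega> = s j)} =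
      prob {\<omega>\<in>space M. \<forall>j\<in>J. T j \<omega> = t j} * prob {\<omega>\<in>space M. \<forall>j\<in>J'. S j \<omega> = s j}"
    using fac[OF J(2,1) J'(2,1)] fac[OF J(2,1) finite.emptyI empty_subsetI] by (simp add: prob_space)
qed (use I I' in \<open>auto intro: simple_T simple_S\<close>)

text \<open>The constant \<open>c\<close> in \<open>step\<close> is the conditional probability of \<open>T N = t N\<close> given the layers
  in \<open>F\<close> and the relabellings in \<open>G\<close>; these determine the events left after removing \<open>N\<close>.\<close>

lemma prob_T_S_cylinder_by_peeling:
  assumes J: "finite J" "J \<subseteq> I" and I: "I \<subseteq> {m. enat (Suc m) < \<tau>}"
    and step: "\<And>J. finite J \<Longrightarrow> J \<noteq> {} \<Longrightarrow> J \<subseteq> I \<Longrightarrow> \<exists>N\<in>J. \<exists>F G.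
      finite F \<and> F \<subseteq> {m. enat (Suc m) < \<tau>} \<and> finite G \<and> G \<subseteq> {m. enat m < \<tau>} \<and>
      J - {N} \<subseteq> F \<inter> G \<and> Suc ` (J - {N}) \<subseteq> G \<and> J' \<subseteq> G \<and>
      (\<exists>c. \<forall>l s. prob {\<omega>\<in>space M. T N \<omega> = t N \<and> (\<forall>m\<in>F. L m \<omega> = l m) \<and> (\<forall>m\<in>G. S m \<omega> = s m)} =
        c * prob {\<omega>\<in>space M. (\<forall>m\<in>F. L m \<omega> = l m) \<and> (\<forall>m\<in>G. S m \<omega> = s m)})"
  shows "prob {\<omega>\<in>space M. (\<forall>j\<in>J. T j \<omega> = t j) \<and> (\<forall>j\<in>J'. S j \<omega> = s j)} =
    (\<Prod>j\<in>J. prob {\<omega>\<in>space M. T j \<omega> = t j}) * prob {\<omega>\<in>space M. \<forall>j\<in>J'. S j \<omega> = s j}"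
proof (rule prob_eq_prod_by_peeling[OF J])
  fix J assume J: "finite J" "J \<noteq> {}" "J \<subseteq> I"
  from step[OF J] obtain N F G c where N: "N \<in> J" and F: "finite F" "F \<subseteq> {m. enat (Suc m) < \<tau>}"
    and G: "finite G" "G \<subseteq> {m. enat m < \<tau>}" and J0: "J - {N} \<subseteq> F \<inter> G" "Suc ` (J - {N}) \<subseteq> G"
    and J': "J' \<subseteq> G"
    and points: "\<And>l s. prob {\<omega>\<in>space M. T N \<omega> = t N \<and> (\<forall>m\<in>F. L m \<omega> = l m) \<and> (\<forall>m\<in>G. S m \<omega> = s m)} =
      c * prob {\<omega>\<in>space M. (\<forall>m\<in>F. L m \<omega> = l m) \<and> (\<forall>m\<in>G. S m \<omega> = s m)}"
    by blast
  have "enat (Suc N) < \<tau>" using N J(3) I by auto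
  note indep = prob_T_indep_layers_sigmas[OF this F G points]
  have "{\<omega>\<in>space M. (\<forall>j\<in>J. T j \<omega> = t j) \<and> (\<forall>j\<in>J'. S j \<omega> = s j)} =
      {\<omega>\<in>space M. T N \<omega> = t N \<and> (\<forall>j\<in>J - {N}. T j \<omega> = t j) \<and> (\<forall>j\<in>J'. S j \<omega> = s j)}"
    using N by blast
  then show "\<exists>N\<in>J. prob {\<omega>\<in>space M. (\<forall>j\<in>J. T j \<omega> = t j) \<and> (\<forall>j\<in>J'. S j \<omega> = s j)} =
      prob {\<omega>\<in>space M. T N \<omega> = t N} * prob {\<omega>\<in>space M. (\<forall>j\<in>J - {N}. T j \<omega> = t j) \<and> (\<forall>j\<in>J'. S j \<omega> = s j)}"
    using prob_T_peel[where t=t and N=N, OF indep, of "J - {N}" J' s] J0 J' N by auto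
qed

end

section \<open>Forward and backward neutral models\<close>

locale forward_relabelled_genealogy = relabelled_genealogy +
  assumes forward: "forward_neutral M \<tau> X E"
begin

abbreviation K :: "nat \<Rightarrow> 'a \<Rightarrow> nat \<Rightarrow> nat" where "K n \<omega> \<equiv> Kvec X (E \<omega>) n"

lemma K_eq: "\<omega> \<in> space M \<Longrightarrow> K n \<omega> = Kvec X (L n \<omega>) n"
  by (rule Kvec_layer[OF genealogy_E])

lemma simple_K: "enat (Suc n) < \<tau> \<Longrightarrow> simple_function M (K n)"
  using simple_function_compose1[OF simple_L, of n "\<lambda>l. Kvec X l n"] K_eq
  by (subst simple_function_cong) auto

lemma K_exchangeable:
  "enat (Suc n) < \<tau> \<Longrightarrow> p permutes {1..X n} \<Longrightarrow> distr M cs (\<lambda>\<omega>. K n \<omega> \<circ> p) = distr M cs (K n)"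
  using forward unfolding forward_neutral_def by metis

lemma K_indep_past:
  "enat (Suc n) < \<tau> \<Longrightarrow> indep_rv M cs (K n) (PiM {..<n} (\<lambda>_. cs)) (\<lambda>\<omega>. \<lambda>m\<in>{..<n}. L m \<omega>)"
  using forward unfolding forward_neutral_def by blast

lemma prob_T_cylinder_proportional:
  assumes N: "enat (Suc N) < \<tau>"
  shows "\<exists>c. \<forall>l s. prob {\<omega>\<in>space M. T N \<omega> = t \<and> (\<forall>m\<in>{..<N}. L m \<omega> = l m) \<and> (\<forall>m\<in>{..N}. S m \<omega> = s m)} =
    c * prob {\<omega>\<in>space M. (\<forall>m\<in>{..<N}. L m \<omega> = l m) \<and> (\<forall>m\<in>{..N}. S m \<omega> = s m)}"
proof -
  have N0: "enat N < \<tau>" using enat_less_mono[OF _ N] by simp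
  have F: "finite {..<N}" "{..<N} \<subseteq> {m. enat (Suc m) < \<tau>}" by (auto intro!: enat_less_mono[OF _ N])
  have G: "finite {..N}" "{..N} \<subseteq> {m. enat m < \<tau>}" by (auto intro!: enat_less_mono[OF _ N0])
  obtain \<phi> where \<phi>: "\<And>l a. is_layer X N l \<Longrightarrow> a permutes Vg X N \<Longrightarrow>
      card {q. q permutes Vg X (Suc N) \<and> map_prod a q ` l = t} = \<phi> (Kvec X l N \<circ> index_perm X N a)"
    using card_children_relabellings_factor by blast
  let ?c = "(\<integral>\<omega>. real (\<phi> (K N \<omega>)) \<partial>M) / real (card (perms (Suc N)))"
  show ?thesis
  proof (intro exI allI)
    fix l s
    let ?LF = "{\<omega>\<in>space M. \<forall>m\<in>{..<N}. L m \<omega> = l m}" and ?Pi = "\<Prod>m\<in>{..N}. prob {\<omega>\<in>space M. S m \<omega> = s m}"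
    have "prob {\<omega>\<in>space M. T N \<omega> = t \<and> (\<forall>m\<in>{..<N}. L m \<omega> = l m) \<and> (\<forall>m\<in>{..N}. S m \<omega> = s m)} =
      ?Pi / real (card (perms (Suc N))) *
      (\<integral>\<omega>. indicator ?LF \<omega> * real (card {q \<in> perms (Suc N). map_prod (s N) q ` L N \<omega> = t}) \<partial>M)"
      using N F G by (intro prob_T_cylinder_eq_integral) (auto simp: sig_layer_def)
    also have "\<dots> = ?Pi * prob ?LF * ?c"
    proof (cases "s N permutes Vg X N")
      case True
      have "(\<integral>\<omega>. indicator ?LF \<omega> * real (card {q \<in> perms (Suc N). map_prod (s N) q ` L N \<omega> = t}) \<partial>M) =
          (\<integral>\<omega>. indicator {\<omega>\<in>space M. \<forall>m\<in>{..<N}. L m \<omega> \<in> {l m}} \<omega> *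
            real (\<phi> (K N \<omega> \<circ> index_perm X N (s N))) \<partial>M)"
        using \<phi>[OF is_layer_layer[OF genealogy_E N] True] K_eq
        by (intro Bochner_Integration.integral_cong) auto
      also have "\<dots> = prob ?LF * (\<integral>\<omega>. real (\<phi> (K N \<omega>)) \<partial>M)"
        using integral_indicator_cylinder_mult_exchangeable[OF K_indep_past[OF N] simple_K[OF N] F(1) order_refl
            K_exchangeable[OF N index_perm_permutes[OF True]], where B="\<lambda>m. {l m}" and g="\<lambda>\<kappa>. real (\<phi> \<kappa>)"]
        by (simp add: comp_def)
      finally show ?thesis by simp
    next
      case False
      then have "?Pi = 0" using prob_S[OF N0] by (intro prod_zero bexI[of _ N]) auto
      then show ?thesis by simp
    qed
    also have "?Pi * prob ?LF = prob {\<omega>\<in>space M. (\<forall>m\<in>{..<N}. L m \<omega> = l m) \<and> (\<forall>m\<in>{..N}. S m \<omega> = s m)}"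
      using prob_layers_sigmas[OF F G, of "\<lambda>m. {l m}" s] by simp
    finally show "prob {\<omega>\<in>space M. T N \<omega> = t \<and> (\<forall>m\<in>{..<N}. L m \<omega> = l m) \<and> (\<forall>m\<in>{..N}. S m \<omega> = s m)} =
      ?c * prob {\<omega>\<in>space M. (\<forall>m\<in>{..<N}. L m \<omega> = l m) \<and> (\<forall>m\<in>{..N}. S m \<omega> = s m)}"
      by simp
  qed
qed

lemma prob_T_S_cylinder_eq_prod:
  assumes J: "finite J" "J \<subseteq> {m. n \<le> m \<and> enat (Suc m) < \<tau>}"
    and J': "J' \<subseteq> {m. m \<le> n \<and> enat m < \<tau>}"
  shows "prob {\<omega>\<in>space M. (\<forall>j\<in>J. T j \<omega> = t j) \<and> (\<forall>j\<in>J'. S j \<omega> = s j)} =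
    (\<Prod>j\<in>J. prob {\<omega>\<in>space M. T j \<omega> = t j}) * prob {\<omega>\<in>space M. \<forall>j\<in>J'. S j \<omega> = s j}"
proof (rule prob_T_S_cylinder_by_peeling[OF J])
  fix J assume J: "finite J" "J \<noteq> {}" "J \<subseteq> {m. n \<le> m \<and> enat (Suc m) < \<tau>}"
  define N where "N = Max J"
  have N: "N \<in> J" "\<And>j. j \<in> J \<Longrightarrow> j \<le> N" using J unfolding N_def by auto
  then have NS: "enat (Suc N) < \<tau>" and "n \<le> N" using J(3) by auto
  have N0: "enat N < \<tau>" using enat_less_mono[OF _ NS] by simp
  have F: "finite {..<N}" "{..<N} \<subseteq> {m. enat (Suc m) < \<tau>}" by (auto intro!: enat_less_mono[OF _ NS])
  have G: "finite {..N}" "{..N} \<subseteq> {m. enat m < \<tau>}" by (auto intro!: enat_less_mono[OF _ N0])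
  have lt: "j < N" if "j \<in> J - {N}" for j using N(2) that by force
  have J0: "J - {N} \<subseteq> {..<N} \<inter> {..N}" "Suc ` (J - {N}) \<subseteq> {..N}"
    using lt by (force, force simp: Suc_le_eq)
  have "J' \<subseteq> {..N}" using J' \<open>n \<le> N\<close> by auto
  then show "\<exists>N\<in>J. \<exists>F G. finite F \<and> F \<subseteq> {m. enat (Suc m) < \<tau>} \<and> finite G \<and> G \<subseteq> {m. enat m < \<tau>} \<and>
      J - {N} \<subseteq> F \<inter> G \<and> Suc ` (J - {N}) \<subseteq> G \<and> J' \<subseteq> G \<and>
      (\<exists>c. \<forall>l s. prob {\<omega>\<in>space M. T N \<omega> = t N \<and> (\<forall>m\<in>F. L m \<omega> = l m) \<and> (\<forall>m\<in>G. S m \<omega> = s m)} =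
        c * prob {\<omega>\<in>space M. (\<forall>m\<in>F. L m \<omega> = l m) \<and> (\<forall>m\<in>G. S m \<omega> = s m)})"
    using prob_T_cylinder_proportional[OF NS, of "t N"]
    by (intro bexI[OF _ N(1)] exI[of _ "{..<N}"] exI[of _ "{..N}"] conjI F G J0 \<open>J' \<subseteq> {..N}\<close>)
qed auto

lemma prob_T_cylinder_eq_prod:
  assumes "finite J" "J \<subseteq> {m. enat (Suc m) < \<tau>}"
  shows "prob {\<omega>\<in>space M. \<forall>j\<in>J. T j \<omega> = t j} = (\<Prod>j\<in>J. prob {\<omega>\<in>space M. T j \<omega> = t j})"
  using prob_T_S_cylinder_eq_prod[OF assms(1), where n=0 and J'="{}"] assms(2) by (auto simp: prob_space)

end

locale backward_relabelled_genealogy = relabelled_genealogy +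
  assumes backward: "backward_neutral M \<tau> X E"
begin

abbreviation Sib :: "nat \<Rightarrow> 'a \<Rightarrow> vert set set" where "Sib n \<omega> \<equiv> Xi X (E \<omega>) n"

lemma simple_Sib: "enat (Suc n) < \<tau> \<Longrightarrow> simple_function M (Sib n)"
  using simple_function_compose1[OF simple_L, of n "\<lambda>l. Xi X l n"] by (simp add: Xi_layer[symmetric])

lemma Sib_exchangeable:
  assumes "enat (Suc n) < \<tau>" "\<pi> permutes Vg X (Suc n)"
  shows "distr M cs (\<lambda>\<omega>. (\<lambda>B. \<pi> ` B) ` Sib n \<omega>) = distr M cs (Sib n)"
  using backward assms unfolding backward_neutral_def by (metis (no_types, lifting))

lemma Sib_indep_future:
  "enat (Suc n) < \<tau> \<Longrightarrow> indep_rv M cs (Sib n)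
    (PiM {m. n < m \<and> enat (Suc m) < \<tau>} (\<lambda>_. cs)) (\<lambda>\<omega>. \<lambda>m\<in>{m. n < m \<and> enat (Suc m) < \<tau>}. L m \<omega>)"
  using backward unfolding backward_neutral_def by blast

text \<open>The horizon \<open>Mx\<close> keeps the conditioning future finite, so that it takes finitely many values.\<close>

lemma prob_T_cylinder_proportional:
  assumes N: "enat (Suc N) < \<tau>" and Mx: "Suc N \<le> Mx"
  defines "F \<equiv> {m. N < m \<and> m \<le> Mx \<and> enat (Suc m) < \<tau>}" and "G \<equiv> {m. N < m \<and> m \<le> Mx \<and> enat m < \<tau>}"
  shows "\<exists>c. \<forall>l s. prob {\<omega>\<in>space M. T N \<omega> = t \<and> (\<forall>m\<in>F. L m \<omega> = l m) \<and> (\<forall>m\<in>G. S m \<omega> = s m)} =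
    c * prob {\<omega>\<in>space M. (\<forall>m\<in>F. L m \<omega> = l m) \<and> (\<forall>m\<in>G. S m \<omega> = s m)}"
proof -
  have N0: "enat N < \<tau>" using enat_less_mono[OF _ N] by simp
  have F: "finite F" "F \<subseteq> {m. enat (Suc m) < \<tau>}" "F \<subseteq> {m. N < m \<and> enat (Suc m) < \<tau>}"
    unfolding F_def by (auto intro: finite_subset[of _ "{..Mx}"])
  have G: "finite G" "G \<subseteq> {m. enat m < \<tau>}" "Suc N \<in> G"
    unfolding G_def using N Mx by (auto intro: finite_subset[of _ "{..Mx}"])
  obtain \<phi> where \<phi>: "\<And>l b. is_layer X N l \<Longrightarrow> b permutes Vg X (Suc N) \<Longrightarrow>
      card {q. q permutes Vg X N \<and> map_prod q b ` l = t} = \<phi> ((\<lambda>B. b ` B) ` Xi X l N)"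
    using card_parent_relabellings_factor by blast
  let ?c = "(\<integral>\<omega>. real (\<phi> (Sib N \<omega>)) \<partial>M) / real (card (perms N))"
  show ?thesis
  proof (intro exI allI)
    fix l s
    let ?LF = "{\<omega>\<in>space M. \<forall>m\<in>F. L m \<omega> = l m}" and ?Pi = "\<Prod>m\<in>G. prob {\<omega>\<in>space M. S m \<omega> = s m}"
    let ?b = "s (Suc N)"
    have "prob {\<omega>\<in>space M. T N \<omega> = t \<and> (\<forall>m\<in>F. L m \<omega> = l m) \<and> (\<forall>m\<in>G. S m \<omega> = s m)} =
      ?Pi / real (card (perms N)) *
      (\<integral>\<omega>. indicator ?LF \<omega> * real (card {q \<in> perms N. map_prod q ?b ` L N \<omega> = t}) \<partial>M)"
      using N0 F G unfolding G_def F_def by (intro prob_T_cylinder_eq_integral[OF N]) (auto simp: sig_layer_def)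
    also have "\<dots> = ?Pi * prob ?LF * ?c"
    proof (cases "?b permutes Vg X (Suc N)")
      case True
      have "(\<integral>\<omega>. indicator ?LF \<omega> * real (card {q \<in> perms N. map_prod q ?b ` L N \<omega> = t}) \<partial>M) =
          (\<integral>\<omega>. indicator {\<omega>\<in>space M. \<forall>m\<in>F. L m \<omega> \<in> {l m}} \<omega> * real (\<phi> ((\<lambda>B. ?b ` B) ` Sib N \<omega>)) \<partial>M)"
        using \<phi>[OF is_layer_layer[OF genealogy_E N] True] Xi_layer
        by (intro Bochner_Integration.integral_cong) auto
      also have "\<dots> = prob ?LF * (\<integral>\<omega>. real (\<phi> (Sib N \<omega>)) \<partial>M)"
        using integral_indicator_cylinder_mult_exchangeable[OF Sib_indep_future[OF N] simple_Sib[OF N] F(1,3)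
            Sib_exchangeable[OF N True], where B="\<lambda>m. {l m}" and g="\<lambda>\<xi>. real (\<phi> \<xi>)"]
        by simp
      finally show ?thesis by simp
    next
      case False
      then have "?Pi = 0" using prob_S[OF N] G by (intro prod_zero bexI[of _ "Suc N"]) auto
      then show ?thesis by simp
    qed
    also have "?Pi * prob ?LF = prob {\<omega>\<in>space M. (\<forall>m\<in>F. L m \<omega> = l m) \<and> (\<forall>m\<in>G. S m \<omega> = s m)}"
      using prob_layers_sigmas[OF F(1,2) G(1,2), of "\<lambda>m. {l m}" s] by simp
    finally show "prob {\<omega>\<in>space M. T N \<omega> = t \<and> (\<forall>m\<in>F. L m \<omega> = l m) \<and> (\<forall>m\<in>G. S m \<omega> = s m)} =
      ?c * prob {\<omega>\<in>space M. (\<forall>m\<in>F. L m \<omega> = l m) \<and> (\<forall>m\<in>G. S m \<omega> = s m)}"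
      by simp
  qed
qed

lemma prob_T_S_cylinder_eq_prod:
  assumes J: "finite J" "J \<subseteq> {m. m < n \<and> enat (Suc m) < \<tau>}"
    and J': "finite J'" "J' \<subseteq> {m. n \<le> m \<and> enat m < \<tau>}"
  shows "prob {\<omega>\<in>space M. (\<forall>j\<in>J. T j \<omega> = t j) \<and> (\<forall>j\<in>J'. S j \<omega> = s j)} =
    (\<Prod>j\<in>J. prob {\<omega>\<in>space M. T j \<omega> = t j}) * prob {\<omega>\<in>space M. \<forall>j\<in>J'. S j \<omega> = s j}"
proof (rule prob_T_S_cylinder_by_peeling[OF J])
  fix J assume J: "finite J" "J \<noteq> {}" "J \<subseteq> {m. m < n \<and> enat (Suc m) < \<tau>}"
  define N where "N = Min J"
  define Mx where "Mx = Max (insert (Suc N) (Suc ` J \<union> J'))"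
  define F where "F = {m. N < m \<and> m \<le> Mx \<and> enat (Suc m) < \<tau>}"
  define G where "G = {m. N < m \<and> m \<le> Mx \<and> enat m < \<tau>}"
  have N: "N \<in> J" "\<And>j. j \<in> J \<Longrightarrow> N \<le> j" using J unfolding N_def by auto
  then have NS: "enat (Suc N) < \<tau>" and "N < n" using J(3) by auto
  have fin: "finite (insert (Suc N) (Suc ` J \<union> J'))" using J(1) J'(1) by simp
  have Mx: "Suc N \<le> Mx" "\<And>j. j \<in> J \<Longrightarrow> Suc j \<le> Mx" "\<And>j. j \<in> J' \<Longrightarrow> j \<le> Mx"
    unfolding Mx_def using Max_ge[OF fin] by auto
  have J0: "j \<in> F \<and> j \<in> G \<and> Suc j \<in> G" if "j \<in> J - {N}" for j
  proof -
    have "N < j" using N(2) that by force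
    moreover have "enat (Suc j) < \<tau>" using J(3) that by auto
    moreover have "enat j < \<tau>" using enat_less_mono[OF _ \<open>enat (Suc j) < \<tau>\<close>, of j] by simp
    ultimately show ?thesis using Mx(2)[of j] that unfolding F_def G_def by auto
  qed
  then have J0: "J - {N} \<subseteq> F \<inter> G" "Suc ` (J - {N}) \<subseteq> G" by auto
  have "J' \<subseteq> G" using J'(2) Mx(3) \<open>N < n\<close> unfolding G_def by fastforce
  moreover have "finite F" "F \<subseteq> {m. enat (Suc m) < \<tau>}" "finite G" "G \<subseteq> {m. enat m < \<tau>}"
    unfolding F_def G_def by (auto intro: finite_subset[of _ "{..Mx}"])
  ultimately show "\<exists>N\<in>J. \<exists>F G. finite F \<and> F \<subseteq> {m. enat (Suc m) < \<tau>} \<and> finite G \<and> G \<subseteq> {m. enat m < \<tau>} \<and>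
      J - {N} \<subseteq> F \<inter> G \<and> Suc ` (J - {N}) \<subseteq> G \<and> J' \<subseteq> G \<and>
      (\<exists>c. \<forall>l s. prob {\<omega>\<in>space M. T N \<omega> = t N \<and> (\<forall>m\<in>F. L m \<omega> = l m) \<and> (\<forall>m\<in>G. S m \<omega> = s m)} =
        c * prob {\<omega>\<in>space M. (\<forall>m\<in>F. L m \<omega> = l m) \<and> (\<forall>m\<in>G. S m \<omega> = s m)})"
    using prob_T_cylinder_proportional[OF NS Mx(1), of "t N"] unfolding F_def[symmetric] G_def[symmetric]
    by (intro bexI[OF _ N(1)] exI[of _ F] exI[of _ G] conjI J0)
qed auto

lemma prob_T_cylinder_eq_prod:
  assumes "finite J" "J \<subseteq> {m. enat (Suc m) < \<tau>}"
  shows "prob {\<omega>\<in>space M. \<forall>j\<in>J. T j \<omega> = t j} = (\<Prod>j\<in>J. prob {\<omega>\<in>space M. T j \<omega> = t j})"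
proof -
  have "J \<subseteq> {m. m < Suc (Max (insert 0 J)) \<and> enat (Suc m) < \<tau>}"
    using assms by (auto simp: less_Suc_eq_le)
  then show ?thesis
    using prob_T_S_cylinder_eq_prod[OF assms(1) _ finite.emptyI, of _ t] by (simp add: prob_space)
qed

end

theorem theorem3p2:
  fixes M :: "'w measure" and \<tau> :: enat and X :: "nat \<Rightarrow> nat" and k :: "nat \<Rightarrow> nat \<Rightarrow> nat"
    and \<E> :: "'w \<Rightarrow> edge set" and \<sigma> :: "'w \<Rightarrow> vert \<Rightarrow> vert"
  assumes "prob_space M"
    and "genealogy_data \<tau> X k"
    and "genealogy_model M \<tau> X k \<E>"
    and neutral: "forward_neutral M \<tau> X \<E> \<or> backward_neutral M \<tau> X \<E>"
    and "uniform_P M \<tau> X \<sigma>"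
    and "indep_rv M
           (PiM {n. enat n < \<tau>} (\<lambda>_. cs)) (\<lambda>\<omega>. \<lambda>n\<in>{n. enat n < \<tau>}. sig X \<sigma> n \<omega>)
           (PiM {n. enat (Suc n) < \<tau>} (\<lambda>_. cs)) (\<lambda>\<omega>. \<lambda>n\<in>{n. enat (Suc n) < \<tau>}. layer X (\<E> \<omega>) n)"
  shows "completely_neutral M \<tau> X (\<lambda>\<omega>. perm_edges (\<sigma> \<omega>) (\<E> \<omega>)) \<and>
         (forward_neutral M \<tau> X \<E> \<longrightarrow>
           (\<forall>n. indep_rv M
             (PiM {m. n \<le> m \<and> enat (Suc m) < \<tau>} (\<lambda>_. cs))
             (\<lambda>\<omega>. \<lambda>m\<in>{m. n \<le> m \<and> enat (Suc m) < \<tau>}. sig_layer X \<sigma> \<E> m \<omega>)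
             (PiM {m. m \<le> n \<and> enat m < \<tau>} (\<lambda>_. cs))
             (\<lambda>\<omega>. \<lambda>m\<in>{m. m \<le> n \<and> enat m < \<tau>}. sig X \<sigma> m \<omega>))) \<and>
         (backward_neutral M \<tau> X \<E> \<longrightarrow>
           (\<forall>n. indep_rv M
             (PiM {m. m < n \<and> enat (Suc m) < \<tau>} (\<lambda>_. cs))
             (\<lambda>\<omega>. \<lambda>m\<in>{m. m < n \<and> enat (Suc m) < \<tau>}. sig_layer X \<sigma> \<E> m \<omega>)
             (PiM {m. n \<le> m \<and> enat m < \<tau>} (\<lambda>_. cs))
             (\<lambda>\<omega>. \<lambda>m\<in>{m. n \<le> m \<and> enat m < \<tau>}. sig X \<sigma> m \<omega>)))"
proof -
  interpret relabelled_genealogy M \<tau> X k \<E> \<sigma>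
    using assms(1,3,5,6) by (simp add: relabelled_genealogy_def)
  have fwd: "forward_relabelled_genealogy M \<tau> X k \<E> \<sigma>" if "forward_neutral M \<tau> X \<E>"
    using that by unfold_locales
  have bwd: "backward_relabelled_genealogy M \<tau> X k \<E> \<sigma>" if "backward_neutral M \<tau> X \<E>"
    using that by unfold_locales
  have "prob {\<omega>\<in>space M. \<forall>j\<in>J. T j \<omega> = t j} = (\<Prod>j\<in>J. prob {\<omega>\<in>space M. T j \<omega> = t j})"
    if "finite J" "J \<subseteq> {m. enat (Suc m) < \<tau>}" for J t
    using neutral forward_relabelled_genealogy.prob_T_cylinder_eq_prod[OF fwd that]
      backward_relabelled_genealogy.prob_T_cylinder_eq_prod[OF bwd that] by blast
  then show ?thesis
    using forward_relabelled_genealogy.prob_T_S_cylinder_eq_prod[OF fwd]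
      backward_relabelled_genealogy.prob_T_S_cylinder_eq_prod[OF bwd]
    by (auto intro!: completely_neutral_perm_edges indep_rv_T_S)
qed

end
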